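(* For all $z,w\in\tilde\Gamma^dV$ the element $(z,w)_d$ is divisible by $d!$ in $R$, and the form $(z,w)_\sim:=\frac1{d!}(z,w)_d$ on $\tilde\Gamma^dV$ is even and non-degenerate. Moreover, it is supersymmetric or superantisymmetric, depending on the parity of $d$ and on whether $(\cdot,\cdot)$ is supersymmetric or superantisymmetric.
   Context: Let $R$ be a principal ideal domain of characteristic $0$. A calibrated $R$-supermodule is a free $R$-supermodule $V=V_{\bar0}\oplus V_{\bar1}$ of finite rank with a decomposition $V_{\bar0}=V_{\mathfrak a}\oplus V_{\mathfrak c}$ into free $R$-submodules. For bases $B_{\mathfrak a},B_{\mathfrak c},B_{\bar1}$ of the three pieces and a total order on $B=B_{\mathfrak a}\sqcup B_{\mathfrak c}\sqcup B_{\bar1}$: $\mathfrak S_d$ acts on $V^{\otimes d}$ on the right by $(v_1\otimes\cdots\otimes v_d)^\sigma=(-1)^{\langle\sigma;\mathbf v\rangle}v_{\sigma1}\otimes\cdots\otimes v_{\sigma d}$ with $\langle\sigma;\mathbf v\rangle$ the number of $k<l$ with $\sigma^{-1}k>\sigma^{-1}l$ and $v_k,v_l$ odd; $\Gamma^dV$ denotes the invariants; for $\mathbf b\in B^d$, $\langle\mathbf b\rangle$ is the number of $k<l$ with $b_k,b_l\in B_{\bar1}$, $b_k>b_l$, and $[\mathbf b]^!_{\mathfrak c}=\prod_{b\in B_{\mathfrak c}}\#\{k:b_k=b\}!$; $\mathrm{Seq}(B,d)$ is the set of $\mathbf b\in B^d$ in which only elements of $B_{\mathfrak a}\sqcup B_{\mathfrak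 c}$ may repeat; $x_{\mathbf b}=\sum(-1)^{\langle\mathbf b\rangle+\langle\mathbf b'\rangle}b'_1\otimes\cdots\otimes b'_d$ over the distinct place-permutations $\mathbf b'$ of $\mathbf b$; $y_{\mathbf b}=[\mathbf b]^!_{\mathfrak c}x_{\mathbf b}$; $\tilde\Gamma^dV=\mathrm{span}_R\{y_{\mathbf b}:\mathbf b\in\mathrm{Seq}(B,d)\}$ (this submodule does not depend on the choice of the complement $V_{\mathfrak c}$ or of bases). Setting: $V$ is a calibrated $R$-supermodule with an even, non-degenerate, $R$-valued bilinear form $(\cdot,\cdot)$, supersymmetric or superantisymmetric, such that $(V_{\mathfrak a},V_{\mathfrak a})=0$ and $V_{\mathfrak c}$ can be chosen so that the restriction of $(\cdot,\cdot)$ to $V_{\mathfrak a}\times V_{\mathfrak c}$ is a perfect pairing. The form on $V^{\otimes d}$ is $(v_1\otimes\cdots\otimes v_d,w_1\otimes\cdots\otimes w_d)_d=(-1)^{\langle\mathbf v,\mathbf w\rangle}\prod_k(v_k,w_k)$, where $\langle\mathbf v,\mathbf w\rangle$ is the number of pairs $k>l$ with $v_k$ and $w_l$ odd. *)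

theory Defs
  imports Main "HOL-Library.Multiset"
begin

definition pid_ring :: "'r::comm_ring_1 itself \<Rightarrow> bool" where
  "pid_ring _ \<longleftrightarrow>
     (\<forall>I::'r set. (0 \<in> I \<and> (\<forall>x\<in>I. \<forall>y\<in>I. x + y \<in> I) \<and> (\<forall>r. \<forall>x\<in>I. r * x \<in> I))
        \<longrightarrow> (\<exists>a. I = {a * r | r. True}))"

text \<open>The free module with basis X: coordinate functions supported in X.\<close>
definition fvec :: "'b set \<Rightarrow> ('b \<Rightarrow> 'r::zero) set" where
  "fvec X = {x. \<forall>i. i \<notin> X \<longrightarrow> x i = 0}"

definition lin_functional :: "('x \<Rightarrow> 'r::comm_ring_1) set \<Rightarrow> (('x \<Rightarrow> 'r) \<Rightarrow> 'r) \<Rightarrow> bool" where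
  "lin_functional M \<phi> \<longleftrightarrow>
     (\<forall>x\<in>M. \<forall>y\<in>M. \<forall>a b. \<phi> (\<lambda>i. a * x i + b * y i) = a * \<phi> x + b * \<phi> y)"

text \<open>Perfect pairing M x N -> R: both induced maps to the dual modules are bijective.
  A form on M is non-degenerate iff it is a perfect pairing M x M.\<close>
definition perfect_pairing ::
  "('x \<Rightarrow> 'r::comm_ring_1) set \<Rightarrow> ('y \<Rightarrow> 'r) set \<Rightarrow> (('x \<Rightarrow> 'r) \<Rightarrow> ('y \<Rightarrow> 'r) \<Rightarrow> 'r) \<Rightarrow> bool" where
  "perfect_pairing M N F \<longleftrightarrow>
     (\<forall>\<phi>. lin_functional N \<phi> \<longrightarrow> (\<exists>!x. x \<in> M \<and> (\<forall>y\<in>N. F x y = \<phi> y))) \<and>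
     (\<forall>\<psi>. lin_functional M \<psi> \<longrightarrow> (\<exists>!y. y \<in> N \<and> (\<forall>x\<in>M. F x y = \<psi> x)))"

definition vform :: "'b set \<Rightarrow> 'b set \<Rightarrow> ('b \<Rightarrow> 'b \<Rightarrow> 'r::comm_ring_1) \<Rightarrow> ('b \<Rightarrow> 'r) \<Rightarrow> ('b \<Rightarrow> 'r) \<Rightarrow> 'r" where
  "vform X Y g x y = (\<Sum>i\<in>X. \<Sum>j\<in>Y. x i * y j * g i j)"

text \<open>Tensors in V^{\<otimes>d} are functions on words (lists) of length d over B.\<close>
definition tuples :: "'b set \<Rightarrow> nat \<Rightarrow> 'b list set" where
  "tuples B d = {bs. length bs = d \<and> set bs \<subseteq> B}"

definition tsign :: "'b set \<Rightarrow> 'b list \<Rightarrow> 'b list \<Rightarrow> nat" where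
  "tsign B1 bs cs = card {(k, l). l < k \<and> k < length bs \<and> bs ! k \<in> B1 \<and> cs ! l \<in> B1}"

definition tform :: "'b set \<Rightarrow> 'b set \<Rightarrow> ('b \<Rightarrow> 'b \<Rightarrow> 'r::comm_ring_1) \<Rightarrow> nat
    \<Rightarrow> ('b list \<Rightarrow> 'r) \<Rightarrow> ('b list \<Rightarrow> 'r) \<Rightarrow> 'r" where
  "tform B B1 g d x y =
     (\<Sum>bs\<in>tuples B d. \<Sum>cs\<in>tuples B d.
        x bs * y cs * (-1) ^ tsign B1 bs cs * (\<Prod>k<d. g (bs ! k) (cs ! k)))"

definition inv_odd :: "'b::linorder set \<Rightarrow> 'b list \<Rightarrow> nat" where
  "inv_odd B1 bs = card {(k, l). k < l \<and> l < length bs \<and> bs ! k \<in> B1 \<and> bs ! l \<in> B1 \<and> bs ! k > bs ! l}"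

definition fact_c :: "'b set \<Rightarrow> 'b list \<Rightarrow> nat" where
  "fact_c Bc bs = (\<Prod>b\<in>Bc. fact (count_list bs b))"

definition xvec :: "'b::linorder set \<Rightarrow> 'b list \<Rightarrow> 'b list \<Rightarrow> 'r::comm_ring_1" where
  "xvec B1 bs = (\<lambda>cs. if mset cs = mset bs then (-1) ^ (inv_odd B1 bs + inv_odd B1 cs) else 0)"

definition yvec :: "'b::linorder set \<Rightarrow> 'b set \<Rightarrow> 'b list \<Rightarrow> 'b list \<Rightarrow> 'r::comm_ring_1" where
  "yvec B1 Bc bs = (\<lambda>cs. of_nat (fact_c Bc bs) * xvec B1 bs cs)"

definition Seqs :: "'b set \<Rightarrow> 'b set \<Rightarrow> nat \<Rightarrow> 'b list set" where
  "Seqs B B1 d = {bs \<in> tuples B d. \<forall>b\<in>B1. count_list bs b \<le> 1}"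

text \<open>\<tilde>\<Gamma>^d V = R-span of the y_b (Seq(B,d) is finite).\<close>
definition tGamma :: "'b::linorder set \<Rightarrow> 'b set \<Rightarrow> 'b set \<Rightarrow> nat \<Rightarrow> ('b list \<Rightarrow> 'r::comm_ring_1) set" where
  "tGamma B B1 Bc d = {(\<lambda>cs. \<Sum>bs\<in>Seqs B B1 d. c bs * yvec B1 Bc bs cs) | c. True}"

definition tpar :: "'b set \<Rightarrow> 'b list \<Rightarrow> nat" where
  "tpar B1 cs = length (filter (\<lambda>b. b \<in> B1) cs) mod 2"

definition homog :: "'b set \<Rightarrow> nat \<Rightarrow> ('b list \<Rightarrow> 'r::zero) \<Rightarrow> bool" where
  "homog B1 p z \<longleftrightarrow> (\<forall>cs. z cs \<noteq> 0 \<longrightarrow> tpar B1 cs = p)"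

definition tform_tilde :: "'b set \<Rightarrow> 'b set \<Rightarrow> ('b \<Rightarrow> 'b \<Rightarrow> 'r::comm_ring_1) \<Rightarrow> nat
    \<Rightarrow> ('b list \<Rightarrow> 'r) \<Rightarrow> ('b list \<Rightarrow> 'r) \<Rightarrow> 'r" where
  "tform_tilde B B1 g d z w = (THE r. tform B B1 g d z w = of_nat (fact d) * r)"

end

(*
  In coordinates, (-,-)_d pairs the words b and c with the weight
  (-1)^<b,c> * prod_k g(b_k, c_k); as g is even, only words of the same parity pattern
  interact, and for those the sign depends on b alone.  Write y_M for the basis element of a
  multiset M of size d in which no odd letter repeats.  In (y_M, y_L)_d the orbit of x_M and
  the factor [M]!_c give |S_d M| * [M]!_c, while a block of r equal letters of B_a can only be
  paired with letters of B_c (as (V_a, V_a) = 0 and g is even); the r!/[N]! orderings of each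
  multiset N of such partners, together with the factor [N]! split off from [L]!_c, give r!.
  Hence d! = [M]!_a * [M]!_c * |S_d M| divides (y_M, y_L)_d.

  The Gram matrix of g has an inverse h, which is again even and vanishes on B_c x B_c, so h
  satisfies the same hypotheses with B_a and B_c exchanged.  Summing over an intermediate
  multiset, the Gram matrices (y_M, y_L)_g / d! (built with [-]!_c) and (y_M, y_L)_h / d!
  (built with [-]!_a) are mutually inverse, which makes (-,-)_~ a perfect pairing on the span
  of the y_M.  Parity and supersymmetry are checked term by term.
*)

theory Submission
  imports Defs "HOL-Combinatorics.Multiset_Permutations"
begin

section \<open>Adjacent transpositions and inversion counts\<close>

definition swap_adj :: "nat \<Rightarrow> 'a list \<Rightarrow> 'a list" where
  "swap_adj i xs = xs[i := xs ! Suc i, Suc i := xs ! i]"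

lemma length_swap_adj [simp]: "length (swap_adj i xs) = length xs"
  by (simp add: swap_adj_def)

lemma swap_adj_Cons_Suc [simp]: "swap_adj (Suc i) (x # xs) = x # swap_adj i xs"
  by (simp add: swap_adj_def)

lemma swap_adj_0 [simp]: "swap_adj 0 (a # b # xs) = b # a # xs"
  by (simp add: swap_adj_def)

lemma mset_swap_adj [simp]: "Suc i < length xs \<Longrightarrow> mset (swap_adj i xs) = mset xs"
  unfolding swap_adj_def by (rule mset_swap) auto

lemma set_swap_adj [simp]: "Suc i < length xs \<Longrightarrow> set (swap_adj i xs) = set xs"
  by (metis mset_swap_adj set_mset_mset)

lemma nth_swap_adj:
  "k < length xs \<Longrightarrow> Suc i < length xs \<Longrightarrow> swap_adj i xs ! k = xs ! transpose i (Suc i) k"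
  by (auto simp: swap_adj_def transpose_def nth_list_update)

lemma swap_adj_id: "xs ! i = xs ! Suc i \<Longrightarrow> swap_adj i xs = xs"
  unfolding swap_adj_def by (metis list_update_id)

lemma swap_adj_swap_adj [simp]: "Suc i < length xs \<Longrightarrow> swap_adj i (swap_adj i xs) = xs"
  by (rule nth_equalityI) (auto simp: nth_swap_adj transpose_def)

lemma swap_adj_invariant_move_front:
  assumes "\<forall>xs i. Suc i < length xs \<longrightarrow> f (swap_adj i xs) = f xs"
  shows "f (ys @ x # zs) = f (x # ys @ zs)"
  using assms
proof (induction ys arbitrary: f)
  case Nil
  then show ?case by simp
next
  case (Cons y ys)
  have "\<forall>xs i. Suc i < length xs \<longrightarrow> f (y # swap_adj i xs) = f (y # xs)"
    using Cons.prems by (metis Suc_less_eq length_Cons swap_adj_Cons_Suc)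
  from Cons.IH[OF this] have "f (y # ys @ x # zs) = f (y # x # ys @ zs)" by simp
  also have "\<dots> = f (x # y # ys @ zs)"
    using Cons.prems[rule_format, of 0 "y # x # ys @ zs"] by simp
  finally show ?case by simp
qed

lemma swap_adj_invariant_mset_eq:
  assumes "\<forall>xs i. Suc i < length xs \<longrightarrow> f (swap_adj i xs) = f xs" and "mset xs = mset ys"
  shows "f xs = f ys"
  using assms
proof (induction xs arbitrary: ys f)
  case Nil
  then show ?case by simp
next
  case (Cons x xs)
  have "x \<in> set ys" using Cons.prems(2) by (metis list.set_intros(1) set_mset_mset)
  then obtain ys1 ys2 where ys: "ys = ys1 @ x # ys2" by (meson split_list)
  have "\<forall>zs i. Suc i < length zs \<longrightarrow> f (x # swap_adj i zs) = f (x # zs)"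
    using Cons.prems(1) by (metis Suc_less_eq length_Cons swap_adj_Cons_Suc)
  moreover have "mset xs = mset (ys1 @ ys2)" using Cons.prems(2) ys by simp
  ultimately have "f (x # xs) = f (x # ys1 @ ys2)" using Cons.IH[of "\<lambda>t. f (x # t)"] by simp
  also have "\<dots> = f ys" using swap_adj_invariant_move_front[OF Cons.prems(1)] ys by simp
  finally show ?case .
qed

definition pair_count :: "('a \<Rightarrow> 'a \<Rightarrow> bool) \<Rightarrow> 'a list \<Rightarrow> nat" where
  "pair_count R xs = card {(k, l). k < l \<and> l < length xs \<and> R (xs ! k) (xs ! l)}"

lemma pair_count_Cons: "pair_count R (x # xs) = length (filter (R x) xs) + pair_count R xs"
proof -
  let ?S = "\<lambda>xs. {(k, l). k < l \<and> l < length xs \<and> R (xs ! k) (xs ! l)}"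
  let ?A = "(\<lambda>l. (0::nat, Suc l)) ` {l. l < length xs \<and> R x (xs ! l)}"
  let ?B = "(\<lambda>(k, l). (Suc k, Suc l)) ` ?S xs"
  have fin: "finite (?S ys)" for ys
    by (rule finite_subset[of _ "{..<length ys} \<times> {..<length ys}"]) auto
  have split: "?S (x # xs) = ?A \<union> ?B"
  proof
    show "?S (x # xs) \<subseteq> ?A \<union> ?B"
    proof
      fix p assume "p \<in> ?S (x # xs)"
      then obtain k l where p: "p = (k, l)"
        and kl: "k < l" "l < length (x # xs)" "R ((x # xs) ! k) ((x # xs) ! l)"
        by auto
      then obtain l' where l': "l = Suc l'" by (cases l) auto
      show "p \<in> ?A \<union> ?B"
        using kl l' p by (cases k) (auto intro: rev_image_eqI)
    qed
  qed auto
  have "card (?S (x # xs)) = card ?A + card ?B"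
    unfolding split by (rule card_Un_disjoint) (use fin in auto)
  moreover have "card ?A = length (filter (R x) xs)"
    by (subst card_image) (auto simp: inj_on_def length_filter_conv_card)
  moreover have "card ?B = pair_count R xs"
    unfolding pair_count_def by (rule card_image) (auto simp: inj_on_def)
  ultimately show ?thesis unfolding pair_count_def by simp
qed

lemma length_filter_mset_eq: "mset xs = mset ys \<Longrightarrow> length (filter P xs) = length (filter P ys)"
  by (metis mset_filter size_mset)

lemma pair_count_mset_eq:
  assumes sym: "\<And>a b. R a b = R b a" and "mset xs = mset ys"
  shows "pair_count R xs = pair_count R ys"
proof (rule swap_adj_invariant_mset_eq[OF _ assms(2)], intro allI impI)
  show "pair_count R (swap_adj i xs) = pair_count R xs" if "Suc i < length xs" for xs :: "'a list" and i
    using that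
  proof (induction xs arbitrary: i)
    case (Cons x xs)
    show ?case
    proof (cases i)
      case 0
      with Cons.prems obtain y ys where "xs = y # ys" by (cases xs) auto
      with 0 show ?thesis by (simp add: pair_count_Cons sym[of x y])
    next
      case (Suc j)
      with Cons show ?thesis by (simp add: pair_count_Cons length_filter_mset_eq[OF mset_swap_adj])
    qed
  qed simp
qed

lemma inv_odd_Cons:
  "inv_odd B1 (x # xs) = length (filter (\<lambda>b. x \<in> B1 \<and> b \<in> B1 \<and> b < x) xs) + inv_odd B1 xs"
proof -
  have "inv_odd B1 ys = pair_count (\<lambda>a b. a \<in> B1 \<and> b \<in> B1 \<and> b < a) ys" for ys
    by (simp add: inv_odd_def pair_count_def)
  then show ?thesis by (simp add: pair_count_Cons)
qed

lemma inv_odd_append_even: "set xs \<inter> B1 = {} \<Longrightarrow> inv_odd B1 (xs @ ys) = inv_odd B1 ys"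
  by (induction xs) (auto simp: inv_odd_Cons)

lemma tsign_self_eq_pair_count: "tsign B1 xs xs = pair_count (\<lambda>a b. a \<in> B1 \<and> b \<in> B1) xs"
proof -
  let ?P = "{(k, l). k < l \<and> l < length xs \<and> xs ! k \<in> B1 \<and> xs ! l \<in> B1}"
  have "{(k, l). l < k \<and> k < length xs \<and> xs ! k \<in> B1 \<and> xs ! l \<in> B1} = prod.swap ` ?P"
    by (auto simp: image_iff)
  moreover have "card (prod.swap ` ?P) = card ?P"
    by (rule card_image) (auto simp: inj_on_def)
  ultimately show ?thesis by (simp add: tsign_def pair_count_def)
qed

lemma tsign_self_mset_eq: "mset xs = mset ys \<Longrightarrow> tsign B1 xs xs = tsign B1 ys ys"
  unfolding tsign_self_eq_pair_count by (rule pair_count_mset_eq) auto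

section \<open>Supersymmetric tensors\<close>

definition odd_sign :: "'b::linorder set \<Rightarrow> 'b list \<Rightarrow> 'r::comm_ring_1" where
  "odd_sign B1 xs = (-1) ^ inv_odd B1 xs"

definition swap_sign :: "'b set \<Rightarrow> 'b list \<Rightarrow> nat \<Rightarrow> 'r::comm_ring_1" where
  "swap_sign B1 xs i = (if xs ! i \<in> B1 \<and> xs ! Suc i \<in> B1 then -1 else 1)"

text \<open>Membership in \<open>\<Gamma>\<^sup>d V\<close> of a tensor given by its coefficients on words: invariance under the
  signed action of the adjacent transpositions, which generate \<open>S\<^sub>d\<close>.\<close>

definition sym_tensor :: "'b set \<Rightarrow> ('b list \<Rightarrow> 'r::comm_ring_1) \<Rightarrow> bool" where
  "sym_tensor B1 z \<longleftrightarrow> (\<forall>cs i. Suc i < length cs \<longrightarrow> z (swap_adj i cs) = swap_sign B1 cs i * z cs)"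

lemma odd_sign_square [simp]: "odd_sign B1 xs * odd_sign B1 xs = 1"
  by (simp add: odd_sign_def flip: power_add)

lemma mult_odd_sign_cancel: "(a * odd_sign B1 xs) * (b * odd_sign B1 xs) = a * b"
proof -
  have "(a * odd_sign B1 xs) * (b * odd_sign B1 xs) = a * b * (odd_sign B1 xs * odd_sign B1 xs)"
    by (simp only: mult_ac)
  then show ?thesis by simp
qed

lemma odd_sign_nonzero [simp]: "odd_sign B1 xs \<noteq> 0"
  using odd_sign_square[of B1 xs] by (metis mult_zero_left zero_neq_one)

lemma swap_sign_square [simp]: "swap_sign B1 xs i * swap_sign B1 xs i = 1"
  by (simp add: swap_sign_def)

lemma odd_sign_Cons:
  "odd_sign B1 (c # cs) = (-1) ^ length (filter (\<lambda>b. c \<in> B1 \<and> b \<in> B1 \<and> b < c) cs) * odd_sign B1 cs"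
  by (simp add: odd_sign_def inv_odd_Cons power_add)

lemma odd_sign_swap_adj:
  "Suc i < length xs \<Longrightarrow> odd_sign B1 (swap_adj i xs) =
     (if xs ! i \<noteq> xs ! Suc i \<and> xs ! i \<in> B1 \<and> xs ! Suc i \<in> B1 then -1 else 1) * odd_sign B1 xs"
proof (induction xs arbitrary: i)
  case (Cons x xs)
  show ?case
  proof (cases i)
    case 0
    with Cons.prems obtain y ys where "xs = y # ys" by (cases xs) auto
    with 0 show ?thesis
      by (cases "x < y"; cases "y < x") (auto simp: odd_sign_Cons ac_simps)
  next
    case (Suc j)
    with Cons show ?thesis by (simp add: odd_sign_Cons length_filter_mset_eq[OF mset_swap_adj])
  qed
qed simp

lemma sym_tensor_mset_eq:
  assumes "sym_tensor B1 z" "mset xs = mset ys"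
  shows "z xs * odd_sign B1 xs = z ys * odd_sign B1 ys"
proof (rule swap_adj_invariant_mset_eq[OF _ assms(2)], intro allI impI)
  fix xs :: "'a list" and i assume i: "Suc i < length xs"
  show "z (swap_adj i xs) * odd_sign B1 (swap_adj i xs) = z xs * odd_sign B1 xs"
  proof (cases "xs ! i = xs ! Suc i")
    case True
    then show ?thesis by (simp add: swap_adj_id)
  next
    case False
    with assms(1) i have "z (swap_adj i xs) * odd_sign B1 (swap_adj i xs) =
        (swap_sign B1 xs i * swap_sign B1 xs i) * (z xs * odd_sign B1 xs)"
      unfolding sym_tensor_def by (simp add: odd_sign_swap_adj swap_sign_def)
    then show ?thesis by simp
  qed
qed

lemma two_le_count_nth:
  assumes "i < length cs" "j < length cs" "i \<noteq> j" "cs ! i = cs ! j"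
  shows "2 \<le> count (mset cs) (cs ! i)"
proof -
  have "count (mset cs) (cs ! i) = card {k. k < length cs \<and> cs ! i = cs ! k}"
    by (metis length_replicate replicate_count_mset_eq_filter_eq length_filter_conv_card)
  moreover have "card {i, j} \<le> card {k. k < length cs \<and> cs ! i = cs ! k}"
    using assms by (intro card_mono) auto
  ultimately show ?thesis using assms(3) by simp
qed

text \<open>Swapping two equal odd letters changes the sign of the coefficient, which therefore
  vanishes in characteristic \<open>\<noteq> 2\<close>.\<close>

lemma sym_tensor_repeated_odd:
  fixes z :: "'b::linorder list \<Rightarrow> 'r::{idom, ring_char_0}"
  assumes "sym_tensor B1 z" "b \<in> B1" "2 \<le> count (mset cs) b"
  shows "z cs = 0"
proof -
  define cs' where "cs' = b # b # remove1 b (remove1 b cs)"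
  have b1: "b \<in># mset cs - {#b#}"
    using assms(3) by (simp add: in_diff_count)
  then have b0: "b \<in># mset cs" by (rule in_diffD)
  have mset_cs': "mset cs' = mset cs"
    unfolding cs'_def by (simp only: mset.simps mset_remove1 insert_DiffM[OF b1] insert_DiffM[OF b0])
  have "z cs' = swap_sign B1 cs' 0 * z cs'"
    using assms(1) unfolding sym_tensor_def by (metis cs'_def length_Cons swap_adj_0 zero_less_Suc Suc_less_eq)
  then have "z cs' = - z cs'" using assms(2) by (simp add: swap_sign_def cs'_def)
  then have "z cs' = 0" by (simp add: eq_neg_iff_add_eq_0 flip: mult_2)
  then show ?thesis
    using sym_tensor_mset_eq[OF assms(1) mset_cs'] by simp
qed

definition x_mset :: "'b::linorder set \<Rightarrow> 'b multiset \<Rightarrow> 'b list \<Rightarrow> 'r::comm_ring_1" where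
  "x_mset B1 N cs = (if mset cs = N then odd_sign B1 cs else 0)"

definition mult_fact :: "'b set \<Rightarrow> 'b multiset \<Rightarrow> nat" where
  "mult_fact C N = (\<Prod>c\<in>C. fact (count N c))"

definition y_mset :: "'b::linorder set \<Rightarrow> 'b set \<Rightarrow> 'b multiset \<Rightarrow> 'b list \<Rightarrow> 'r::comm_ring_1" where
  "y_mset B1 C N cs = of_nat (mult_fact C N) * x_mset B1 N cs"

lemma sym_tensor_x_mset:
  assumes "\<forall>b\<in>B1. count N b \<le> 1"
  shows "sym_tensor B1 (x_mset B1 N)"
  unfolding sym_tensor_def
proof (intro allI impI)
  fix cs :: "'a list" and i assume i: "Suc i < length cs"
  show "x_mset B1 N (swap_adj i cs) = swap_sign B1 cs i * x_mset B1 N cs"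
  proof (cases "mset cs = N \<and> cs ! i = cs ! Suc i")
    case True
    then have "cs ! i \<notin> B1"
      using assms two_le_count_nth[of i cs "Suc i"] i by fastforce
    with True show ?thesis by (simp add: swap_adj_id swap_sign_def)
  next
    case False
    with i show ?thesis by (auto simp: x_mset_def odd_sign_swap_adj swap_sign_def)
  qed
qed

section \<open>Words of fixed length and rearrangement classes\<close>

lemma tuples_0 [simp]: "tuples B 0 = {[]}"
  by (auto simp: tuples_def)

lemma tuples_Suc: "tuples B (Suc d) = (\<lambda>(c, cs). c # cs) ` (B \<times> tuples B d)"
proof (rule set_eqI)
  show "xs \<in> tuples B (Suc d) \<longleftrightarrow> xs \<in> (\<lambda>(c, cs). c # cs) ` (B \<times> tuples B d)" for xs
    by (cases xs) (auto simp: tuples_def image_iff)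
qed

lemma finite_tuples [simp]: "finite B \<Longrightarrow> finite (tuples B d)"
  unfolding tuples_def by (rule finite_subset[OF _ finite_lists_length_eq[of B d]]) auto

lemma swap_adj_in_tuples_iff [simp]:
  "Suc i < length cs \<Longrightarrow> swap_adj i cs \<in> tuples B d \<longleftrightarrow> cs \<in> tuples B d"
  by (auto simp: tuples_def)

lemma sum_tuples_swap_adj:
  assumes "Suc i < d"
  shows "(\<Sum>cs\<in>tuples B d. F (swap_adj i cs)) = (\<Sum>cs\<in>tuples B d. F cs)"
  by (rule sum.reindex_bij_witness[where i = "swap_adj i" and j = "swap_adj i"])
     (use assms in \<open>auto simp: tuples_def\<close>)

lemma sum_tuples_Suc:
  "(\<Sum>cs\<in>tuples B (Suc d). F cs) = (\<Sum>c\<in>B. \<Sum>cs\<in>tuples B d. F (c # cs))"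
proof -
  have "inj_on (\<lambda>(c, cs). c # cs) (B \<times> tuples B d)"
    by (auto simp: inj_on_def)
  then show ?thesis
    unfolding tuples_Suc by (simp add: sum.reindex sum.cartesian_product case_prod_unfold)
qed

lemma sum_prod_tuples:
  fixes F :: "nat \<Rightarrow> 'b \<Rightarrow> 'r::comm_semiring_1"
  shows "(\<Sum>cs\<in>tuples B d. \<Prod>k<d. F k (cs ! k)) = (\<Prod>k<d. \<Sum>c\<in>B. F k c)"
proof (induction d arbitrary: F)
  case (Suc d)
  have "(\<Sum>cs\<in>tuples B (Suc d). \<Prod>k<Suc d. F k (cs ! k)) =
        (\<Sum>c\<in>B. \<Sum>cs\<in>tuples B d. F 0 c * (\<Prod>k<d. F (Suc k) (cs ! k)))"
    by (simp add: sum_tuples_Suc prod.lessThan_Suc_shift del: prod.lessThan_Suc)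
  also have "\<dots> = (\<Sum>c\<in>B. F 0 c) * (\<Prod>k<d. \<Sum>c\<in>B. F (Suc k) c)"
    using Suc.IH[of "\<lambda>k. F (Suc k)"] by (simp add: sum_distrib_right flip: sum_distrib_left)
  finally show ?case
    by (simp add: prod.lessThan_Suc_shift del: prod.lessThan_Suc)
qed simp

lemma sum_tuples_append:
  "(\<Sum>zs\<in>tuples B (r + n). F zs) = (\<Sum>xs\<in>tuples B r. \<Sum>ys\<in>tuples B n. F (xs @ ys))"
proof -
  have split: "tuples B (r + n) = (\<lambda>(xs, ys). xs @ ys) ` (tuples B r \<times> tuples B n)"
  proof (intro set_eqI iffI)
    fix zs assume "zs \<in> tuples B (r + n)"
    then have "(take r zs, drop r zs) \<in> tuples B r \<times> tuples B n"
      by (auto simp: tuples_def dest: in_set_takeD in_set_dropD)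
    then show "zs \<in> (\<lambda>(xs, ys). xs @ ys) ` (tuples B r \<times> tuples B n)"
      by (auto intro!: rev_image_eqI)
  qed (auto simp: tuples_def)
  have "inj_on (\<lambda>(xs, ys). xs @ ys) (tuples B r \<times> tuples B n)"
    by (auto simp: inj_on_def tuples_def)
  then show ?thesis
    unfolding split by (simp add: sum.reindex sum.cartesian_product case_prod_unfold)
qed


definition Seq_msets :: "'b set \<Rightarrow> 'b set \<Rightarrow> nat \<Rightarrow> 'b multiset set" where
  "Seq_msets B B1 d = mset ` Seqs B B1 d"

lemma Seq_msets_iff:
  "N \<in> Seq_msets B B1 d \<longleftrightarrow> set_mset N \<subseteq> B \<and> size N = d \<and> (\<forall>b\<in>B1. count N b \<le> 1)"
proof
  assume "N \<in> Seq_msets B B1 d"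
  then show "set_mset N \<subseteq> B \<and> size N = d \<and> (\<forall>b\<in>B1. count N b \<le> 1)"
    by (auto simp: Seq_msets_def Seqs_def tuples_def count_mset)
next
  assume N: "set_mset N \<subseteq> B \<and> size N = d \<and> (\<forall>b\<in>B1. count N b \<le> 1)"
  obtain xs where "mset xs = N" using ex_mset by blast
  moreover from this N have "xs \<in> Seqs B B1 d"
    by (auto simp: Seqs_def tuples_def simp flip: count_mset)
  ultimately show "N \<in> Seq_msets B B1 d" unfolding Seq_msets_def by blast
qed

lemma finite_Seq_msets [simp]: "finite B \<Longrightarrow> finite (Seq_msets B B1 d)"
  unfolding Seq_msets_def Seqs_def by auto

lemma sum_tuples_rearrangement_class:
  assumes "finite B" "set_mset N \<subseteq> B" "size N = d" "mset n = N"
    and "\<And>cs. mset cs = N \<Longrightarrow> F cs = F n"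
  shows "(\<Sum>cs\<in>tuples B d. if mset cs = N then F cs else 0) =
    of_nat (card (permutations_of_multiset N)) * F n"
proof -
  have rearrangements: "{cs \<in> tuples B d. mset cs = N} = permutations_of_multiset N"
    using assms(2,3) by (auto simp: tuples_def permutations_of_multiset_def simp flip: size_mset)
  have "(\<Sum>cs\<in>tuples B d. if mset cs = N then F cs else 0) =
      (\<Sum>cs\<in>{cs \<in> tuples B d. mset cs = N}. F cs)"
    using assms(1) by (simp add: sum.inter_filter)
  also have "\<dots> = (\<Sum>cs\<in>permutations_of_multiset N. F n)"
    unfolding rearrangements by (rule sum.cong) (auto simp: assms(5) permutations_of_multiset_def)
  finally show ?thesis by simp
qed

lemma sum_x_mset_mult:
  assumes "finite B" "set_mset N \<subseteq> B" "size N = d" "mset n = N" "sym_tensor B1 z"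
  shows "(\<Sum>cs\<in>tuples B d. x_mset B1 N cs * z cs) =
    of_nat (card (permutations_of_multiset N)) * (odd_sign B1 n * z n)"
proof -
  have "(\<Sum>cs\<in>tuples B d. x_mset B1 N cs * z cs) =
      (\<Sum>cs\<in>tuples B d. if mset cs = N then z cs * odd_sign B1 cs else 0)"
    by (rule sum.cong) (auto simp: x_mset_def mult.commute)
  also have "\<dots> = of_nat (card (permutations_of_multiset N)) * (z n * odd_sign B1 n)"
    by (rule sum_tuples_rearrangement_class[OF assms(1-4)])
       (use sym_tensor_mset_eq[OF assms(5)] assms(4) in auto)
  finally show ?thesis by (simp add: mult.commute)
qed

section \<open>The kernel of the tensor form\<close>

definition even_form :: "'b set \<Rightarrow> 'b set \<Rightarrow> ('b \<Rightarrow> 'b \<Rightarrow> 'r::zero) \<Rightarrow> bool" where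
  "even_form B B1 f \<longleftrightarrow> (\<forall>b\<in>B. \<forall>c\<in>B. (b \<in> B1) \<noteq> (c \<in> B1) \<longrightarrow> f b c = 0)"

definition same_parity :: "'b set \<Rightarrow> 'b list \<Rightarrow> 'b list \<Rightarrow> bool" where
  "same_parity B1 bs cs \<longleftrightarrow> (\<forall>k<length bs. (bs ! k \<in> B1) = (cs ! k \<in> B1))"

definition tkernel :: "'b set \<Rightarrow> ('b \<Rightarrow> 'b \<Rightarrow> 'r::comm_ring_1) \<Rightarrow> nat \<Rightarrow> 'b list \<Rightarrow> 'b list \<Rightarrow> 'r" where
  "tkernel B1 f d bs cs = (-1) ^ tsign B1 bs cs * (\<Prod>k<d. f (bs ! k) (cs ! k))"

lemma even_form_flip: "even_form B B1 f \<Longrightarrow> even_form B B1 (\<lambda>a b. f b a)"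
  by (auto simp: even_form_def)

lemma prod_eq_0_if_not_same_parity:
  fixes f :: "'b \<Rightarrow> 'b \<Rightarrow> 'r::comm_ring_1"
  assumes "even_form B B1 f" "bs \<in> tuples B d" "cs \<in> tuples B d" "\<not> same_parity B1 bs cs"
  shows "(\<Prod>k<d. f (bs ! k) (cs ! k)) = 0"
proof -
  obtain k where k: "k < d" "(bs ! k \<in> B1) \<noteq> (cs ! k \<in> B1)"
    using assms(2,4) by (auto simp: same_parity_def tuples_def)
  moreover have "bs ! k \<in> B" "cs ! k \<in> B" using assms(2,3) k(1) by (auto simp: tuples_def)
  ultimately show ?thesis
    using assms(1) by (intro prod_zero) (auto simp: even_form_def)
qed

lemma tsign_same_parity:
  assumes "length cs = length bs" "same_parity B1 bs cs"
  shows "tsign B1 bs cs = tsign B1 bs bs"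
  using assms unfolding tsign_def same_parity_def by (metis (lifting) order.strict_trans)

lemma tsign_self_same_parity:
  assumes "length cs = length bs" "same_parity B1 bs cs"
  shows "tsign B1 cs cs = tsign B1 bs bs"
  using assms unfolding tsign_def same_parity_def by (metis (lifting) order.strict_trans)

lemma tkernel_even_form:
  fixes f :: "'b \<Rightarrow> 'b \<Rightarrow> 'r::comm_ring_1"
  assumes "even_form B B1 f" "bs \<in> tuples B d" "cs \<in> tuples B d"
  shows "tkernel B1 f d bs cs = (-1) ^ tsign B1 bs bs * (\<Prod>k<d. f (bs ! k) (cs ! k))"
proof (cases "same_parity B1 bs cs")
  case True
  with assms(2,3) show ?thesis by (simp add: tkernel_def tsign_same_parity tuples_def)
next
  case False
  then show ?thesis using prod_eq_0_if_not_same_parity[OF assms False] by (simp add: tkernel_def)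
qed

lemma tkernel_flip:
  fixes f :: "'b \<Rightarrow> 'b \<Rightarrow> 'r::comm_ring_1"
  assumes "even_form B B1 f" "bs \<in> tuples B d" "cs \<in> tuples B d"
  shows "tkernel B1 (\<lambda>a b. f b a) d cs bs = tkernel B1 f d bs cs"
proof (cases "same_parity B1 bs cs")
  case True
  moreover have "length bs = d" "length cs = d" using assms(2,3) by (auto simp: tuples_def)
  ultimately have "tsign B1 cs bs = tsign B1 bs bs"
    by (metis tsign_same_parity tsign_self_same_parity same_parity_def)
  then show ?thesis
    using True tkernel_even_form[OF assms] by (simp add: tkernel_def)
next
  case False
  then show ?thesis
    using prod_eq_0_if_not_same_parity[OF assms False] by (simp add: tkernel_def)
qed

lemma tkernel_swap_adj:
  fixes f :: "'b \<Rightarrow> 'b \<Rightarrow> 'r::comm_ring_1"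
  assumes "even_form B B1 f" "bs \<in> tuples B d" "cs \<in> tuples B d" "Suc i < d"
  shows "tkernel B1 f d (swap_adj i bs) (swap_adj i cs) = tkernel B1 f d bs cs"
proof -
  have len: "length bs = d" "length cs = d" using assms by (auto simp: tuples_def)
  have "tkernel B1 f d (swap_adj i bs) (swap_adj i cs) =
      (-1) ^ tsign B1 (swap_adj i bs) (swap_adj i bs) * (\<Prod>k<d. f (swap_adj i bs ! k) (swap_adj i cs ! k))"
    using assms len by (simp add: tkernel_even_form)
  also have "tsign B1 (swap_adj i bs) (swap_adj i bs) = tsign B1 bs bs"
    using assms(4) len by (intro tsign_self_mset_eq) simp
  also have "(\<Prod>k<d. f (swap_adj i bs ! k) (swap_adj i cs ! k)) =
      (\<Prod>k<d. f (bs ! transpose i (Suc i) k) (cs ! transpose i (Suc i) k))"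
    using assms(4) len by (intro prod.cong) (auto simp: nth_swap_adj)
  also have "\<dots> = (\<Prod>k<d. f (bs ! k) (cs ! k))"
    using assms(4) by (intro prod.reindex_bij_betw bij_betw_transpose_iff) simp
  finally show ?thesis using tkernel_even_form[OF assms(1-3)] by simp
qed

lemma swap_sign_eq_if_tkernel_nonzero:
  fixes f :: "'b \<Rightarrow> 'b \<Rightarrow> 'r::comm_ring_1"
  assumes "even_form B B1 f" "bs \<in> tuples B d" "cs \<in> tuples B d" "Suc i < d"
    and "tkernel B1 f d bs cs \<noteq> 0"
  shows "swap_sign B1 bs i = (swap_sign B1 cs i :: 'r)"
proof -
  have "same_parity B1 bs cs"
    using assms(5) prod_eq_0_if_not_same_parity[OF assms(1-3)] unfolding tkernel_def by force
  with assms(2,4) show ?thesis by (auto simp: same_parity_def swap_sign_def tuples_def)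
qed

definition contract_left :: "'b set \<Rightarrow> 'b set \<Rightarrow> ('b \<Rightarrow> 'b \<Rightarrow> 'r::comm_ring_1) \<Rightarrow> nat
    \<Rightarrow> ('b list \<Rightarrow> 'r) \<Rightarrow> 'b list \<Rightarrow> 'r" where
  "contract_left B B1 f d z cs =
    (if cs \<in> tuples B d then \<Sum>bs\<in>tuples B d. z bs * tkernel B1 f d bs cs else 0)"

definition contract_right :: "'b set \<Rightarrow> 'b set \<Rightarrow> ('b \<Rightarrow> 'b \<Rightarrow> 'r::comm_ring_1) \<Rightarrow> nat
    \<Rightarrow> ('b list \<Rightarrow> 'r) \<Rightarrow> 'b list \<Rightarrow> 'r" where
  "contract_right B B1 f d z bs =
    (if bs \<in> tuples B d then \<Sum>cs\<in>tuples B d. tkernel B1 f d bs cs * z cs else 0)"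

lemma contract_right_eq_contract_left_flip:
  assumes "even_form B B1 f"
  shows "contract_right B B1 f d z = contract_left B B1 (\<lambda>a b. f b a) d z"
  by (auto simp: fun_eq_iff contract_left_def contract_right_def tkernel_flip[OF assms] mult.commute
      intro!: sum.cong)

lemma sym_tensor_contract_left:
  fixes f :: "'b \<Rightarrow> 'b \<Rightarrow> 'r::comm_ring_1"
  assumes "even_form B B1 f" "sym_tensor B1 z"
  shows "sym_tensor B1 (contract_left B B1 f d z)"
  unfolding sym_tensor_def
proof (intro allI impI)
  fix cs :: "'b list" and i assume i: "Suc i < length cs"
  show "contract_left B B1 f d z (swap_adj i cs) = swap_sign B1 cs i * contract_left B B1 f d z cs"
  proof (cases "cs \<in> tuples B d")
    case False
    with i show ?thesis by (simp add: contract_left_def)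
  next
    case cs: True
    with i have id: "Suc i < d" by (simp add: tuples_def)
    have "(\<Sum>bs\<in>tuples B d. z bs * tkernel B1 f d bs (swap_adj i cs)) =
          (\<Sum>bs\<in>tuples B d. z (swap_adj i bs) * tkernel B1 f d (swap_adj i bs) (swap_adj i cs))"
      by (rule sum_tuples_swap_adj[OF id, symmetric])
    also have "\<dots> = (\<Sum>bs\<in>tuples B d. swap_sign B1 bs i * z bs * tkernel B1 f d bs cs)"
      using assms(2) cs id
      by (intro sum.cong refl) (simp add: tkernel_swap_adj[OF assms(1)] sym_tensor_def tuples_def)
    also have "\<dots> = (\<Sum>bs\<in>tuples B d. swap_sign B1 cs i * (z bs * tkernel B1 f d bs cs))"
    proof (intro sum.cong refl)
      fix bs assume "bs \<in> tuples B d"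
      then show "swap_sign B1 bs i * z bs * tkernel B1 f d bs cs = swap_sign B1 cs i * (z bs * tkernel B1 f d bs cs)"
        using swap_sign_eq_if_tkernel_nonzero[OF assms(1) _ cs id] by (cases "tkernel B1 f d bs cs = 0") auto
    qed
    finally show ?thesis using cs i by (simp add: contract_left_def sum_distrib_left)
  qed
qed

lemma sym_tensor_contract_right:
  assumes "even_form B B1 f" "sym_tensor B1 z"
  shows "sym_tensor B1 (contract_right B B1 f d z)"
  unfolding contract_right_eq_contract_left_flip[OF assms(1)]
  by (rule sym_tensor_contract_left[OF even_form_flip[OF assms(1)] assms(2)])

lemma tform_eq_sum_contract_right:
  "tform B B1 f d z w = (\<Sum>bs\<in>tuples B d. z bs * contract_right B B1 f d w bs)"
  by (simp add: tform_def contract_right_def tkernel_def sum_distrib_left mult_ac)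

lemma tform_eq_sum_contract_left:
  "tform B B1 f d z w = (\<Sum>cs\<in>tuples B d. contract_left B B1 f d z cs * w cs)"
  unfolding tform_def contract_left_def tkernel_def
  by (subst sum.swap) (simp add: sum_distrib_left mult_ac)

lemma tform_scale:
  "tform B B1 f d (\<lambda>cs. a * z cs) (\<lambda>cs. b * w cs) = a * b * tform B B1 f d z w"
  by (simp add: tform_def sum_distrib_left mult_ac)

definition right_inverse_on :: "'b set \<Rightarrow> ('b \<Rightarrow> 'b \<Rightarrow> 'r::comm_ring_1) \<Rightarrow> ('b \<Rightarrow> 'b \<Rightarrow> 'r) \<Rightarrow> bool" where
  "right_inverse_on B g h \<longleftrightarrow> (\<forall>b\<in>B. \<forall>a\<in>B. (\<Sum>c\<in>B. g b c * h c a) = (if b = a then 1 else 0))"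

text \<open>Whenever both factors are nonzero, the signs \<open>(-1)^\<langle>b,c\<rangle>\<close> and \<open>(-1)^\<langle>c,a\<rangle>\<close> coincide and
  cancel, so the sum over \<open>c\<close> factors as a product of entries of the matrix product.\<close>

lemma tkernel_inverse:
  fixes f h :: "'b \<Rightarrow> 'b \<Rightarrow> 'r::comm_ring_1"
  assumes "even_form B B1 f" "even_form B B1 h"
    and inv: "right_inverse_on B f h"
    and bs: "bs \<in> tuples B d" and as: "as \<in> tuples B d"
  shows "(\<Sum>cs\<in>tuples B d. tkernel B1 f d bs cs * tkernel B1 h d cs as) = (if bs = as then 1 else 0)"
proof -
  have "(\<Sum>cs\<in>tuples B d. tkernel B1 f d bs cs * tkernel B1 h d cs as) =
        (\<Sum>cs\<in>tuples B d. \<Prod>k<d. f (bs ! k) (cs ! k) * h (cs ! k) (as ! k))"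
  proof (intro sum.cong refl)
    fix cs assume cs: "cs \<in> tuples B d"
    have len: "length bs = d" "length cs = d" using bs cs by (auto simp: tuples_def)
    show "tkernel B1 f d bs cs * tkernel B1 h d cs as = (\<Prod>k<d. f (bs ! k) (cs ! k) * h (cs ! k) (as ! k))"
    proof (cases "same_parity B1 bs cs")
      case True
      with len have "tsign B1 cs cs = tsign B1 bs bs" by (simp add: tsign_self_same_parity)
      then show ?thesis
        using tkernel_even_form[OF assms(1) bs cs] tkernel_even_form[OF assms(2) cs as]
        by (simp add: prod.distrib mult_ac flip: power_add)
    next
      case False
      then show ?thesis
        using prod_eq_0_if_not_same_parity[OF assms(1) bs cs] by (simp add: tkernel_def prod.distrib)
    qed
  qed
  also have "\<dots> = (\<Prod>k<d. \<Sum>c\<in>B. f (bs ! k) c * h c (as ! k))"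
    by (rule sum_prod_tuples)
  also have "\<dots> = (\<Prod>k<d. if bs ! k = as ! k then 1 else 0)"
    using bs as inv by (intro prod.cong refl) (simp add: tuples_def nth_mem subset_iff right_inverse_on_def)
  also have "\<dots> = (if bs = as then 1 else 0)"
    using bs as by (auto simp: tuples_def list_eq_iff_nth_eq intro!: prod_zero)
  finally show ?thesis .
qed

section \<open>The Gram matrices of the bases \<open>y\<close>\<close>

lemma card_permutations_of_multiset_mult_fact:
  assumes "finite C" "set_mset N \<subseteq> C"
  shows "card (permutations_of_multiset N) * mult_fact C N = fact (size N)"
proof -
  have "(\<Prod>x\<in>set_mset N. fact (count N x)) = mult_fact C N"
    unfolding mult_fact_def using assms by (intro prod.mono_neutral_left) (auto simp: not_in_iff)
  then show ?thesis using card_permutations_of_multiset_aux[of N] by simp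
qed

lemma sym_tensor_mult_mset_eq:
  fixes w u :: "'b::linorder list \<Rightarrow> 'r::comm_ring_1"
  assumes "sym_tensor B1 w" "sym_tensor B1 u" "mset cs = mset ds"
  shows "w cs * u cs = w ds * u ds"
proof -
  have "(w cs * odd_sign B1 cs) * (u cs * odd_sign B1 cs) = (w ds * odd_sign B1 ds) * (u ds * odd_sign B1 ds)"
    using sym_tensor_mset_eq[OF assms(1,3)] sym_tensor_mset_eq[OF assms(2,3)] by simp
  then show ?thesis by (simp add: mult_odd_sign_cancel)
qed

lemma sum_rearrangement_class_sym_tensors:
  fixes w u :: "'b::linorder list \<Rightarrow> 'r::{idom, ring_char_0}"
  assumes "finite B" "sym_tensor B1 w" "sym_tensor B1 u" "N \<in> mset ` tuples B d"
  shows "(\<Sum>cs\<in>{cs \<in> tuples B d. mset cs = N}. w cs * u cs) =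
    (if N \<in> Seq_msets B B1 d then of_nat (card (permutations_of_multiset N)) *
      (w (sorted_list_of_multiset N) * u (sorted_list_of_multiset N)) else 0)"
proof -
  let ?n = "sorted_list_of_multiset N"
  have N: "set_mset N \<subseteq> B" "size N = d" using assms(4) by (auto simp: tuples_def)
  have "(\<Sum>cs\<in>{cs \<in> tuples B d. mset cs = N}. w cs * u cs) =
        (\<Sum>cs\<in>tuples B d. if mset cs = N then w cs * u cs else 0)"
    using assms(1) by (simp add: sum.inter_filter)
  also have "\<dots> = (if N \<in> Seq_msets B B1 d then of_nat (card (permutations_of_multiset N)) * (w ?n * u ?n) else 0)"
  proof (cases "N \<in> Seq_msets B B1 d")
    case True
    have "w cs * u cs = w ?n * u ?n" if "mset cs = N" for cs
      using sym_tensor_mult_mset_eq[OF assms(2,3)] that by simp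
    then have "(\<Sum>cs\<in>tuples B d. if mset cs = N then w cs * u cs else 0) =
        of_nat (card (permutations_of_multiset N)) * (w ?n * u ?n)"
      by (rule sum_tuples_rearrangement_class[OF assms(1) N mset_sorted_list_of_multiset,
          where F = "\<lambda>cs. w cs * u cs"])
    with True show ?thesis by simp
  next
    case False
    then obtain b where b: "b \<in> B1" "2 \<le> count N b"
      using N by (auto simp: Seq_msets_iff not_le)
    have "w cs = 0" if "mset cs = N" for cs
      using sym_tensor_repeated_odd[OF assms(2) b(1)] b(2) that by blast
    then have "(\<Sum>cs\<in>tuples B d. if mset cs = N then w cs * u cs else 0) = 0"
      by (intro sum.neutral) simp
    with False show ?thesis by simp
  qed
  finally show ?thesis .
qed

lemma sum_tuples_sym_tensors:
  fixes w u :: "'b::linorder list \<Rightarrow> 'r::{idom, ring_char_0}"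
  assumes "finite B" "sym_tensor B1 w" "sym_tensor B1 u"
  shows "(\<Sum>cs\<in>tuples B d. w cs * u cs) =
    (\<Sum>N\<in>Seq_msets B B1 d. of_nat (card (permutations_of_multiset N)) *
      (w (sorted_list_of_multiset N) * u (sorted_list_of_multiset N)))"
proof -
  have "(\<Sum>cs\<in>tuples B d. w cs * u cs) =
      (\<Sum>N\<in>mset ` tuples B d. \<Sum>cs\<in>{cs \<in> tuples B d. mset cs = N}. w cs * u cs)"
    using assms(1) by (intro sum.group[symmetric]) auto
  also have "\<dots> = (\<Sum>N\<in>mset ` tuples B d \<inter> Seq_msets B B1 d. of_nat (card (permutations_of_multiset N)) *
      (w (sorted_list_of_multiset N) * u (sorted_list_of_multiset N)))"
    using assms by (simp add: sum_rearrangement_class_sym_tensors sum.inter_restrict)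
  also have "mset ` tuples B d \<inter> Seq_msets B B1 d = Seq_msets B B1 d"
    by (auto simp: Seq_msets_def Seqs_def)
  finally show ?thesis .
qed

lemma sum_x_mset_x_mset:
  assumes "finite B" "set_mset M \<subseteq> B" "size M = d"
  shows "(\<Sum>bs\<in>tuples B d. x_mset B1 M bs * x_mset B1 L bs) =
    (if M = L then of_nat (card (permutations_of_multiset M)) else (0::'r::comm_ring_1))"
proof -
  have "(\<Sum>bs\<in>tuples B d. x_mset B1 M bs * x_mset B1 L bs) =
        (\<Sum>bs\<in>tuples B d. if mset bs = M then (if M = L then 1 else 0) else (0::'r))"
    by (intro sum.cong refl) (auto simp: x_mset_def)
  also have "\<dots> = of_nat (card (permutations_of_multiset M)) * (if M = L then 1 else 0)"
    by (rule sum_tuples_rearrangement_class[OF assms, of "sorted_list_of_multiset M"]) auto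
  finally show ?thesis by simp
qed

lemma sum_contract_x_mset_inverse:
  fixes f h :: "'b::linorder \<Rightarrow> 'b \<Rightarrow> 'r::comm_ring_1"
  assumes "finite B" "even_form B B1 f" "even_form B B1 h"
    and inv: "right_inverse_on B f h"
    and M: "set_mset M \<subseteq> B" "size M = d"
  shows "(\<Sum>cs\<in>tuples B d. contract_left B B1 f d (x_mset B1 M) cs * contract_right B B1 h d (x_mset B1 L) cs) =
     (if M = L then of_nat (card (permutations_of_multiset M)) else 0)"
proof -
  let ?T = "tuples B d"
  let ?X = "\<lambda>bs as. x_mset B1 M bs * x_mset B1 L as :: 'r"
  have "(\<Sum>cs\<in>?T. contract_left B B1 f d (x_mset B1 M) cs * contract_right B B1 h d (x_mset B1 L) cs) =
        (\<Sum>cs\<in>?T. \<Sum>bs\<in>?T. \<Sum>as\<in>?T. ?X bs as * (tkernel B1 f d bs cs * tkernel B1 h d cs as))"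
    by (intro sum.cong refl)
       (simp add: contract_left_def contract_right_def sum_product sum_distrib_left mult_ac)
  also have "\<dots> = (\<Sum>bs\<in>?T. \<Sum>as\<in>?T. \<Sum>cs\<in>?T. ?X bs as * (tkernel B1 f d bs cs * tkernel B1 h d cs as))"
    by (subst sum.swap) (subst (2) sum.swap, rule refl)
  also have "\<dots> = (\<Sum>bs\<in>?T. \<Sum>as\<in>?T. ?X bs as * (\<Sum>cs\<in>?T. tkernel B1 f d bs cs * tkernel B1 h d cs as))"
    by (simp add: sum_distrib_left)
  also have "\<dots> = (\<Sum>bs\<in>?T. \<Sum>as\<in>?T. ?X bs as * (if bs = as then 1 else 0))"
    by (intro sum.cong refl) (simp add: tkernel_inverse[OF assms(2,3) inv])
  also have "\<dots> = (\<Sum>bs\<in>?T. ?X bs bs)"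
    using assms(1) by (intro sum.cong refl) (simp add: if_distrib[of "\<lambda>x. _ * x"] cong: if_cong)
  also have "\<dots> = (if M = L then of_nat (card (permutations_of_multiset M)) else 0)"
    by (rule sum_x_mset_x_mset[OF assms(1) M])
  finally show ?thesis .
qed

lemma tform_x_mset_left:
  assumes "finite B" "set_mset N \<subseteq> B" "size N = d" "sym_tensor B1 (contract_right B B1 f d w)"
  shows "tform B B1 f d (x_mset B1 N) w = of_nat (card (permutations_of_multiset N)) *
    (odd_sign B1 (sorted_list_of_multiset N) * contract_right B B1 f d w (sorted_list_of_multiset N))"
  unfolding tform_eq_sum_contract_right by (rule sum_x_mset_mult[OF assms(1-3) _ assms(4)]) simp

lemma tform_x_mset_right:
  assumes "finite B" "set_mset N \<subseteq> B" "size N = d" "sym_tensor B1 (contract_left B B1 f d z)"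
  shows "tform B B1 f d z (x_mset B1 N) = of_nat (card (permutations_of_multiset N)) *
    (odd_sign B1 (sorted_list_of_multiset N) * contract_left B B1 f d z (sorted_list_of_multiset N))"
  unfolding tform_eq_sum_contract_left
  using sum_x_mset_mult[OF assms(1-3) _ assms(4), of "sorted_list_of_multiset N"]
  by (simp add: mult.commute)

locale calibrated_basis =
  fixes B Ba Bc B1 :: "'b::linorder set"
  assumes finite_B: "finite B"
    and B_eq: "B = Ba \<union> Bc \<union> B1"
    and disjoint: "Ba \<inter> Bc = {}" "Ba \<inter> B1 = {}" "Bc \<inter> B1 = {}"
begin

lemma finite_Ba: "finite Ba" and finite_Bc: "finite Bc"
  using finite_B B_eq by auto

lemma swap_roles: "calibrated_basis B Bc Ba B1"
  using finite_B B_eq disjoint by unfold_locales auto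

lemma fact_eq_mult_fact:
  assumes "M \<in> Seq_msets B B1 d"
  shows "mult_fact Ba M * mult_fact Bc M * card (permutations_of_multiset M) = fact d"
proof -
  have M: "set_mset M \<subseteq> B" "size M = d" "\<forall>b\<in>B1. count M b \<le> 1"
    using assms by (auto simp: Seq_msets_iff)
  have "mult_fact B1 M = 1"
    unfolding mult_fact_def using M(3) by (intro prod.neutral) (auto simp: le_Suc_eq)
  moreover have "mult_fact B M = mult_fact Ba M * mult_fact Bc M * mult_fact B1 M"
    unfolding mult_fact_def B_eq using finite_B disjoint
    by (simp add: B_eq prod.union_disjoint Int_Un_distrib2)
  ultimately show ?thesis
    using card_permutations_of_multiset_mult_fact[OF finite_B M(1)] M(2) by (simp add: mult_ac)
qed

lemma y_mset_gram_inverse: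
  fixes f h :: "'b \<Rightarrow> 'b \<Rightarrow> 'r::{idom, ring_char_0}"
  assumes "even_form B B1 f" "even_form B B1 h"
    and inv: "right_inverse_on B f h"
    and M: "M \<in> Seq_msets B B1 d" and L: "L \<in> Seq_msets B B1 d"
  shows "(\<Sum>N\<in>Seq_msets B B1 d. tform B B1 f d (y_mset B1 Bc M) (y_mset B1 Bc N) *
      tform B B1 h d (y_mset B1 Ba N) (y_mset B1 Ba L)) = (if M = L then of_nat (fact d) ^ 2 else 0)"
proof -
  let ?w = "contract_left B B1 f d (x_mset B1 M)" and ?u = "contract_right B B1 h d (x_mset B1 L)"
  let ?p = "\<lambda>N. of_nat (card (permutations_of_multiset N)) :: 'r"
  let ?n = "sorted_list_of_multiset"
  let ?c = "of_nat (mult_fact Bc M) * of_nat (mult_fact Ba L) * of_nat (fact d) :: 'r"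
  have w: "sym_tensor B1 ?w"
    using M by (intro sym_tensor_contract_left assms sym_tensor_x_mset) (simp add: Seq_msets_iff)
  have u: "sym_tensor B1 ?u"
    using L by (intro sym_tensor_contract_right assms sym_tensor_x_mset) (simp add: Seq_msets_iff)
  have "tform B B1 f d (y_mset B1 Bc M) (y_mset B1 Bc N) * tform B B1 h d (y_mset B1 Ba N) (y_mset B1 Ba L)
      = ?c * (?p N * (?w (?n N) * ?u (?n N)))" if N: "N \<in> Seq_msets B B1 d" for N
  proof -
    have N': "set_mset N \<subseteq> B" "size N = d" using N by (auto simp: Seq_msets_iff)
    have "of_nat (mult_fact Ba N) * of_nat (mult_fact Bc N) * ?p N = (of_nat (fact d) :: 'r)"
      using fact_eq_mult_fact[OF N] by (metis of_nat_mult)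
    then show ?thesis
      unfolding y_mset_def[abs_def] tform_scale
        tform_x_mset_right[OF finite_B N' w] tform_x_mset_left[OF finite_B N' u]
      by (simp add: mult_ac)
  qed
  then have "(\<Sum>N\<in>Seq_msets B B1 d. tform B B1 f d (y_mset B1 Bc M) (y_mset B1 Bc N) *
      tform B B1 h d (y_mset B1 Ba N) (y_mset B1 Ba L)) = ?c * (\<Sum>cs\<in>tuples B d. ?w cs * ?u cs)"
    by (simp add: sum_tuples_sym_tensors[OF finite_B w u] sum_distrib_left)
  also have "\<dots> = ?c * (if M = L then ?p M else 0)"
    using M by (simp add: sum_contract_x_mset_inverse[OF finite_B assms(1-3)] Seq_msets_iff)
  also have "\<dots> = (if M = L then of_nat (fact d) ^ 2 else 0)"
    using fact_eq_mult_fact[OF M] by (auto simp: power2_eq_square mult_ac simp flip: of_nat_mult)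
  finally show ?thesis .
qed

end

section \<open>Divisibility by \<open>d!\<close>\<close>

lemma mult_fact_diff_dvd: "mult_fact C (L - N) dvd mult_fact C L"
  unfolding mult_fact_def by (intro prod_dvd_prod fact_dvd) simp

lemma mult_fact_mult_dvd:
  assumes "N \<subseteq># L"
  shows "mult_fact C N * mult_fact C (L - N) dvd mult_fact C L"
  unfolding mult_fact_def prod.distrib[symmetric]
proof (intro prod_dvd_prod)
  fix c
  have le: "count N c \<le> count L c" using assms by (simp add: subseteq_mset_def)
  then have "fact (count N c) * fact (count L c - count N c) dvd (fact (count L c) :: nat)"
    by (metis fact_fact_dvd_fact le_add_diff_inverse)
  then show "fact (count N c) * fact (count (L - N) c) dvd (fact (count L c) :: nat)"
    by simp
qed

lemma mult_fact_add_mset_notin: "x \<notin> C \<Longrightarrow> mult_fact C (add_mset x M) = mult_fact C M"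
  unfolding mult_fact_def by (intro prod.cong refl) auto

lemma mult_fact_replicate:
  assumes "finite C" "x \<in> C" "x \<notin># M"
  shows "mult_fact C (replicate_mset r x + M) = fact r * mult_fact C M"
proof -
  have "mult_fact C (replicate_mset r x + M) = fact r * (\<Prod>c\<in>C - {x}. fact (count M c))"
    unfolding mult_fact_def using assms by (simp add: prod.remove not_in_iff)
  also have "(\<Prod>c\<in>C - {x}. fact (count M c)) = mult_fact C M"
    unfolding mult_fact_def using assms by (simp add: prod.remove not_in_iff)
  finally show ?thesis .
qed

lemma dvd_orbit_mult_fact:
  fixes c X :: "'r::comm_ring_1"
  assumes "finite C" "set_mset N \<subseteq> C" "N \<subseteq># L"
    and "of_nat a dvd of_nat (mult_fact C (L - N)) * X"
  shows "of_nat (fact (size N) * a) dvd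
    of_nat (mult_fact C L) * (of_nat (card (permutations_of_multiset N)) * (c * X))"
proof -
  have perm: "card (permutations_of_multiset N) * mult_fact C N = fact (size N)"
    by (rule card_permutations_of_multiset_mult_fact[OF assms(1,2)])
  obtain k where k: "mult_fact C L = mult_fact C N * mult_fact C (L - N) * k"
    using mult_fact_mult_dvd[OF assms(3)] by (auto elim: dvdE)
  have "of_nat (mult_fact C L) * (of_nat (card (permutations_of_multiset N)) * (c * X)) =
      (of_nat (fact (size N)) * (of_nat k * c)) * (of_nat (mult_fact C (L - N)) * X)"
    by (simp add: k mult_ac flip: perm)
  then show ?thesis
    by (simp only: of_nat_mult) (intro mult_dvd_mono assms(4) dvd_mult2 dvd_refl)
qed

lemma prod_nth_mset_eq:
  fixes F :: "'a \<Rightarrow> 'r::comm_monoid_mult"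
  assumes "mset xs = mset ys"
  shows "(\<Prod>k<length xs. F (xs ! k)) = (\<Prod>k<length ys. F (ys ! k))"
proof -
  have "(\<Prod>k<length zs. F (zs ! k)) = prod_mset (image_mset F (mset zs))" for zs
  proof -
    have "(\<Prod>k<length zs. F (zs ! k)) = prod_list (map F zs)"
      by (simp add: prod.list_conv_set_nth lessThan_atLeast0)
    then show ?thesis by (metis mset_map prod_mset_prod_list)
  qed
  then show ?thesis using assms by simp
qed

lemma prod_lessThan_add:
  fixes g :: "nat \<Rightarrow> 'r::comm_monoid_mult"
  shows "(\<Prod>k<r + n. g k) = (\<Prod>k<r. g k) * (\<Prod>k<n. g (r + k))"
  by (induction n) (simp_all add: mult_ac)

lemma notin_dropWhile_sorted:
  fixes x :: "'a::linorder"
  shows "sorted (x # xs) \<Longrightarrow> x \<notin> set (dropWhile (\<lambda>y. y = x) xs)"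
  by (induction xs) (auto simp: less_le)

lemma x_mset_append_even:
  assumes "set xs \<inter> B1 = {}"
  shows "x_mset B1 L (xs @ ys) = (if mset xs \<subseteq># L then x_mset B1 (L - mset xs) ys else 0)"
  using assms by (auto simp: x_mset_def odd_sign_def inv_odd_append_even)
      (metis add_diff_cancel_left' mset_subset_eq_add_left subset_mset.add_diff_inverse)+

lemma sum_tuples_mset_invariant:
  assumes "finite C" "\<And>xs ys. length xs = r \<Longrightarrow> mset xs = mset ys \<Longrightarrow> F xs = F ys"
  shows "(\<Sum>cs\<in>tuples C r. F cs) =
    (\<Sum>N\<in>mset ` tuples C r. of_nat (card (permutations_of_multiset N)) * F (sorted_list_of_multiset N))"
proof -
  have "(\<Sum>cs\<in>tuples C r. F cs) = (\<Sum>N\<in>mset ` tuples C r. \<Sum>cs\<in>{cs \<in> tuples C r. mset cs = N}. F cs)"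
    using assms(1) by (intro sum.group[symmetric]) auto
  also have "\<dots> = (\<Sum>N\<in>mset ` tuples C r. of_nat (card (permutations_of_multiset N)) * F (sorted_list_of_multiset N))"
  proof (intro sum.cong refl)
    fix N assume "N \<in> mset ` tuples C r"
    then have N: "set_mset N \<subseteq> C" "size N = r" by (auto simp: tuples_def)
    have "(\<Sum>cs\<in>{cs \<in> tuples C r. mset cs = N}. F cs) = (\<Sum>cs\<in>tuples C r. if mset cs = N then F cs else 0)"
      using assms(1) by (simp add: sum.inter_filter)
    also have "\<dots> = of_nat (card (permutations_of_multiset N)) * F (sorted_list_of_multiset N)"
      using assms(2) N(2) by (intro sum_tuples_rearrangement_class[OF assms(1) N]) (auto simp flip: size_mset)
    finally show "(\<Sum>cs\<in>{cs \<in> tuples C r. mset cs = N}. F cs) =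
        of_nat (card (permutations_of_multiset N)) * F (sorted_list_of_multiset N)" .
  qed
  finally show ?thesis .
qed

text \<open>The pairing of the word \<open>m\<close> with \<open>x\<^sub>L\<close>, without the sign \<open>(-1)^\<langle>m,m\<rangle>\<close>.\<close>

definition x_mset_pairing :: "'b set \<Rightarrow> 'b::linorder set \<Rightarrow> ('b \<Rightarrow> 'b \<Rightarrow> 'r::comm_ring_1)
    \<Rightarrow> 'b list \<Rightarrow> 'b multiset \<Rightarrow> 'r" where
  "x_mset_pairing B B1 f m L =
    (\<Sum>cs\<in>tuples B (length m). x_mset B1 L cs * (\<Prod>k<length m. f (m ! k) (cs ! k)))"

lemma contract_right_x_mset:
  fixes f :: "'b::linorder \<Rightarrow> 'b \<Rightarrow> 'r::comm_ring_1"
  assumes "even_form B B1 f" "m \<in> tuples B d"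
  shows "contract_right B B1 f d (x_mset B1 L) m = (-1) ^ tsign B1 m m * x_mset_pairing B B1 f m L"
proof -
  have "length m = d" using assms(2) by (simp add: tuples_def)
  then show ?thesis
    using assms by (simp add: contract_right_def x_mset_pairing_def tkernel_even_form sum_distrib_left mult_ac)
qed

lemma x_mset_pairing_Cons:
  fixes f :: "'b::linorder \<Rightarrow> 'b \<Rightarrow> 'r::comm_ring_1"
  shows "x_mset_pairing B B1 f (x # m) L = (\<Sum>c\<in>B. if c \<in># L then
     f x c * (-1) ^ size (filter_mset (\<lambda>b. c \<in> B1 \<and> b \<in> B1 \<and> b < c) (L - {#c#})) *
       x_mset_pairing B B1 f m (L - {#c#}) else 0)"
proof -
  let ?s = "\<lambda>c. (-1::'r) ^ size (filter_mset (\<lambda>b. c \<in> B1 \<and> b \<in> B1 \<and> b < c) (L - {#c#}))"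
  have "x_mset B1 L (c # cs) = (if c \<in># L then ?s c * x_mset B1 (L - {#c#}) cs else 0)" for c cs
  proof (cases "c \<in># L \<and> mset cs = L - {#c#}")
    case True
    then have "length (filter (\<lambda>b. c \<in> B1 \<and> b \<in> B1 \<and> b < c) cs) =
        size (filter_mset (\<lambda>b. c \<in> B1 \<and> b \<in> B1 \<and> b < c) (L - {#c#}))"
      by (metis mset_filter size_mset)
    with True show ?thesis by (simp add: x_mset_def odd_sign_Cons insert_DiffM)
  next
    case False
    then show ?thesis by (auto simp: x_mset_def)
  qed
  then show ?thesis
    unfolding x_mset_pairing_def
    by (auto simp: sum_tuples_Suc prod.lessThan_Suc_shift sum_distrib_left mult_ac
        simp del: prod.lessThan_Suc intro!: sum.cong)
qed

lemma dvd_x_mset_pairing_Cons: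
  fixes f :: "'b::linorder \<Rightarrow> 'b \<Rightarrow> 'r::comm_ring_1"
  assumes "x \<notin> A"
    and IH: "\<And>L'. of_nat (mult_fact A (mset m)) dvd of_nat (mult_fact C L') * x_mset_pairing B B1 f m L'"
  shows "of_nat (mult_fact A (mset (x # m))) dvd of_nat (mult_fact C L) * x_mset_pairing B B1 f (x # m) L"
  unfolding x_mset_pairing_Cons sum_distrib_left
proof (intro dvd_sum)
  fix c
  have "of_nat (mult_fact C (L - {#c#})) dvd (of_nat (mult_fact C L) :: 'r)"
    using mult_fact_diff_dvd[of C L "{#c#}"] by (auto elim!: dvdE)
  then have IH': "of_nat (mult_fact A (mset m)) dvd of_nat (mult_fact C L) * x_mset_pairing B B1 f m (L - {#c#})"
    by (meson IH dvd_trans mult_dvd_mono dvd_refl)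
  show "of_nat (mult_fact A (mset (x # m))) dvd of_nat (mult_fact C L) *
    (if c \<in># L then f x c * (-1) ^ size (filter_mset (\<lambda>b. c \<in> B1 \<and> b \<in> B1 \<and> b < c) (L - {#c#})) *
      x_mset_pairing B B1 f m (L - {#c#}) else 0)" (is "_ dvd _ * (if _ then ?a * ?F else 0)")
  proof -
    have eq: "of_nat (mult_fact C L) * (if c \<in># L then ?a * ?F else 0) =
        (if c \<in># L then ?a else 0) * (of_nat (mult_fact C L) * ?F)"
      by (simp add: mult_ac)
    show ?thesis
      unfolding eq mset.simps mult_fact_add_mset_notin[OF assms(1)] by (rule dvd_mult[OF IH'])
  qed
qed

context calibrated_basis
begin

lemma form_Ba_eq_0_off_Bc:
  fixes f :: "'b \<Rightarrow> 'b \<Rightarrow> 'r::zero"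
  assumes "even_form B B1 f" "\<forall>a\<in>Ba. \<forall>a'\<in>Ba. f a a' = 0" "x \<in> Ba" "c \<in> B - Bc"
  shows "f x c = 0"
  using assms B_eq disjoint unfolding even_form_def by blast

lemma x_mset_pairing_replicate:
  fixes f :: "'b \<Rightarrow> 'b \<Rightarrow> 'r::comm_ring_1"
  assumes "even_form B B1 f" and iso: "\<forall>a\<in>Ba. \<forall>a'\<in>Ba. f a a' = 0" and x: "x \<in> Ba"
  shows "x_mset_pairing B B1 f (replicate r x @ m) L = (\<Sum>cs1\<in>tuples Bc r. (\<Prod>k<r. f x (cs1 ! k)) *
     (if mset cs1 \<subseteq># L then x_mset_pairing B B1 f m (L - mset cs1) else 0))"
proof -
  let ?P = "\<lambda>cs1. \<Prod>k<r. f x (cs1 ! k)"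
  let ?Q = "\<lambda>cs2. \<Prod>k<length m. f (m ! k) (cs2 ! k)"
  let ?S = "\<lambda>cs1. \<Sum>cs2\<in>tuples B (length m). x_mset B1 L (cs1 @ cs2) * (?P cs1 * ?Q cs2)"
  have "x_mset_pairing B B1 f (replicate r x @ m) L = (\<Sum>cs1\<in>tuples B r. ?S cs1)"
    unfolding x_mset_pairing_def length_append length_replicate sum_tuples_append
    by (intro sum.cong refl) (simp add: prod_lessThan_add nth_append tuples_def)
  also have "\<dots> = (\<Sum>cs1\<in>tuples Bc r. ?S cs1)"
  proof (rule sum.mono_neutral_right)
    show "finite (tuples B r)" using finite_B by simp
    show "tuples Bc r \<subseteq> tuples B r" using B_eq by (auto simp: tuples_def)
    have "?P cs1 = 0" if "cs1 \<in> tuples B r - tuples Bc r" for cs1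
    proof -
      from that have cs1: "\<not> set cs1 \<subseteq> Bc" "length cs1 = r" "set cs1 \<subseteq> B"
        by (auto simp: tuples_def)
      then obtain k where k: "k < r" "cs1 ! k \<in> B - Bc"
        by (metis DiffI in_set_conv_nth subsetD subsetI)
      with form_Ba_eq_0_off_Bc[OF assms] show ?thesis by (intro prod_zero) auto
    qed
    then show "\<forall>cs1\<in>tuples B r - tuples Bc r. ?S cs1 = 0" by (simp del: prod_zero_iff)
  qed
  also have "\<dots> = (\<Sum>cs1\<in>tuples Bc r. ?P cs1 *
      (if mset cs1 \<subseteq># L then x_mset_pairing B B1 f m (L - mset cs1) else 0))"
  proof (intro sum.cong refl)
    fix cs1 assume "cs1 \<in> tuples Bc r"
    then have "set cs1 \<inter> B1 = {}" using disjoint by (auto simp: tuples_def)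
    then show "?S cs1 = ?P cs1 * (if mset cs1 \<subseteq># L then x_mset_pairing B B1 f m (L - mset cs1) else 0)"
      by (simp add: x_mset_append_even x_mset_pairing_def sum_distrib_left mult_ac)
  qed
  finally show ?thesis .
qed

lemma dvd_x_mset_pairing_replicate:
  fixes f :: "'b \<Rightarrow> 'b \<Rightarrow> 'r::comm_ring_1"
  assumes "even_form B B1 f" and iso: "\<forall>a\<in>Ba. \<forall>a'\<in>Ba. f a a' = 0" and x: "x \<in> Ba" "x \<notin> set m"
    and IH: "\<And>L'. of_nat (mult_fact Ba (mset m)) dvd of_nat (mult_fact Bc L') * x_mset_pairing B B1 f m L'"
  shows "of_nat (mult_fact Ba (mset (replicate r x @ m))) dvd
    of_nat (mult_fact Bc L) * x_mset_pairing B B1 f (replicate r x @ m) L"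
proof -
  let ?P = "\<lambda>cs1. \<Prod>k<r. f x (cs1 ! k)"
  let ?G = "\<lambda>N. if N \<subseteq># L then x_mset_pairing B B1 f m (L - N) else 0"
  let ?S = "\<lambda>N. of_nat (card (permutations_of_multiset N)) * (?P (sorted_list_of_multiset N) * ?G N)"
  have invariant: "?P xs * ?G (mset xs) = ?P ys * ?G (mset ys)"
    if "length xs = r" "mset xs = mset ys" for xs ys
  proof -
    have "length ys = r" using that by (metis size_mset)
    then show ?thesis using prod_nth_mset_eq[OF that(2), of "f x"] that by simp
  qed
  have "x_mset_pairing B B1 f (replicate r x @ m) L = (\<Sum>cs1\<in>tuples Bc r. ?P cs1 * ?G (mset cs1))"
    by (rule x_mset_pairing_replicate[OF assms(1,2) x(1)])
  also have "\<dots> = (\<Sum>N\<in>mset ` tuples Bc r. of_nat (card (permutations_of_multiset N)) *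
      (?P (sorted_list_of_multiset N) * ?G (mset (sorted_list_of_multiset N))))"
    by (rule sum_tuples_mset_invariant[OF finite_Bc invariant])
  also have "\<dots> = (\<Sum>N\<in>mset ` tuples Bc r. ?S N)"
    by (simp only: mset_sorted_list_of_multiset)
  finally have "x_mset_pairing B B1 f (replicate r x @ m) L = (\<Sum>N\<in>mset ` tuples Bc r. ?S N)" .
  moreover have "of_nat (fact r * mult_fact Ba (mset m)) dvd of_nat (mult_fact Bc L) * ?S N"
    if "N \<in> mset ` tuples Bc r" for N
  proof (cases "N \<subseteq># L")
    case True
    have "set_mset N \<subseteq> Bc" "size N = r" using that by (auto simp: tuples_def)
    with True show ?thesis
      using dvd_orbit_mult_fact[OF finite_Bc _ True IH, of "?P (sorted_list_of_multiset N)"] by simp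
  qed simp
  moreover have "mult_fact Ba (mset (replicate r x @ m)) = fact r * mult_fact Ba (mset m)"
    using mult_fact_replicate[OF finite_Ba x(1)] x(2) by simp
  ultimately show ?thesis
    by (simp only: sum_distrib_left) (intro dvd_sum)
qed

lemma dvd_x_mset_pairing:
  fixes f :: "'b \<Rightarrow> 'b \<Rightarrow> 'r::comm_ring_1"
  assumes "even_form B B1 f" and iso: "\<forall>a\<in>Ba. \<forall>a'\<in>Ba. f a a' = 0"
  shows "sorted m \<Longrightarrow> of_nat (mult_fact Ba (mset m)) dvd of_nat (mult_fact Bc L) * x_mset_pairing B B1 f m L"
proof (induction "length m" arbitrary: m L rule: less_induct)
  case less
  show ?case
  proof (cases m)
    case Nil
    then show ?thesis by (simp add: mult_fact_def)
  next
    case (Cons x m')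
    show ?thesis
    proof (cases "x \<in> Ba")
      case False
      have "of_nat (mult_fact Ba (mset m')) dvd of_nat (mult_fact Bc L') * x_mset_pairing B B1 f m' L'" for L'
        using less Cons by simp
      then show ?thesis unfolding Cons by (rule dvd_x_mset_pairing_Cons[OF False])
    next
      case True
      define r where "r = length (takeWhile (\<lambda>y. y = x) m)"
      define m'' where "m'' = dropWhile (\<lambda>y. y = x) m"
      have m: "m = replicate r x @ m''"
        unfolding r_def m''_def
        by (metis (mono_tags, lifting) replicate_length_same set_takeWhileD takeWhile_dropWhile_id)
      have "length m'' < length m" "sorted m''"
        using Cons less.prems by (auto simp: m''_def sorted_dropWhile le_imp_less_Suc length_dropWhile_le)
      then have IH: "of_nat (mult_fact Ba (mset m'')) dvd of_nat (mult_fact Bc L') * x_mset_pairing B B1 f m'' L'"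
        for L'
        by (rule less.hyps)
      have "x \<notin> set m''"
        unfolding m''_def using Cons less.prems notin_dropWhile_sorted by simp
      then show ?thesis
        unfolding m by (rule dvd_x_mset_pairing_replicate[OF assms True _ IH])
    qed
  qed
qed

lemma dvd_tform_y_mset:
  fixes f :: "'b \<Rightarrow> 'b \<Rightarrow> 'r::comm_ring_1"
  assumes "even_form B B1 f" "\<forall>a\<in>Ba. \<forall>a'\<in>Ba. f a a' = 0"
    and M: "M \<in> Seq_msets B B1 d" and L: "L \<in> Seq_msets B B1 d"
  shows "of_nat (fact d) dvd tform B B1 f d (y_mset B1 Bc M) (y_mset B1 Bc L)"
proof -
  let ?m = "sorted_list_of_multiset M"
  let ?p = "card (permutations_of_multiset M)"
  have M': "set_mset M \<subseteq> B" "size M = d" using M by (auto simp: Seq_msets_iff)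
  then have m: "?m \<in> tuples B d" by (auto simp: tuples_def simp flip: size_mset)
  have sym: "sym_tensor B1 (contract_right B B1 f d (x_mset B1 L))"
    using L by (intro sym_tensor_contract_right assms(1) sym_tensor_x_mset) (simp add: Seq_msets_iff)
  have "tform B B1 f d (y_mset B1 Bc M) (y_mset B1 Bc L) =
      (of_nat (mult_fact Bc M) * of_nat ?p) * ((of_nat (mult_fact Bc L) * x_mset_pairing B B1 f ?m L) *
        (odd_sign B1 ?m * (-1) ^ tsign B1 ?m ?m))"
    unfolding y_mset_def[abs_def] tform_scale tform_x_mset_left[OF finite_B M' sym]
    by (simp add: contract_right_x_mset[OF assms(1) m] mult_ac)
  moreover have "(of_nat (fact d) :: 'r) = (of_nat (mult_fact Bc M) * of_nat ?p) * of_nat (mult_fact Ba M)"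
    using fact_eq_mult_fact[OF M] by (metis mult.commute mult.left_commute of_nat_mult)
  moreover have "of_nat (mult_fact Ba M) dvd of_nat (mult_fact Bc L) * x_mset_pairing B B1 f ?m L"
    using dvd_x_mset_pairing[OF assms(1,2), of ?m L] by simp
  ultimately show ?thesis
    by (simp only:) (rule mult_dvd_mono[OF dvd_refl dvd_mult2])
qed

end

section \<open>Perfect pairings on finite spans\<close>

lemma mult_delta_left [simp]:
  fixes x y :: "'a::mult_zero"
  shows "(if P then x else 0) * y = (if P then x * y else 0)"
  by simp

lemma mult_delta_right [simp]:
  fixes x y :: "'a::mult_zero"
  shows "y * (if P then x else 0) = (if P then y * x else 0)"
  by simp

definition lincomb :: "'m set \<Rightarrow> ('m \<Rightarrow> 'r::comm_ring_1) \<Rightarrow> ('m \<Rightarrow> 'x \<Rightarrow> 'r) \<Rightarrow> 'x \<Rightarrow> 'r" where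
  "lincomb S a Y = (\<lambda>i. \<Sum>N\<in>S. a N * Y N i)"

definition lincomb_span :: "'m set \<Rightarrow> ('m \<Rightarrow> 'x \<Rightarrow> 'r::comm_ring_1) \<Rightarrow> ('x \<Rightarrow> 'r) set" where
  "lincomb_span S Y = range (\<lambda>a. lincomb S a Y)"

lemma lincomb_in_span [simp]: "lincomb S a Y \<in> lincomb_span S Y"
  by (simp add: lincomb_span_def)

lemma lincomb_delta: "finite S \<Longrightarrow> L \<in> S \<Longrightarrow> lincomb S (\<lambda>N. if N = L then 1 else 0) Y = Y L"
  by (simp add: lincomb_def)

lemma generator_in_lincomb_span: "finite S \<Longrightarrow> L \<in> S \<Longrightarrow> Y L \<in> lincomb_span S Y"
  by (metis lincomb_delta lincomb_in_span)

lemma lincomb_cong: "(\<And>N. N \<in> S \<Longrightarrow> a N = b N) \<Longrightarrow> lincomb S a Y = lincomb S b Y"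
  by (simp add: lincomb_def)

lemma lincomb_restrict:
  "finite S \<Longrightarrow> U \<subseteq> S \<Longrightarrow> lincomb S (\<lambda>N. if N \<in> U then b N else 0) Y = (\<lambda>i. \<Sum>N\<in>U. b N * Y N i)"
  by (simp add: lincomb_def Int_absorb1 flip: sum.inter_restrict)

lemma lin_functional_lincomb:
  assumes "finite S" "lin_functional (lincomb_span S Y) \<phi>"
  shows "\<phi> (lincomb S b Y) = (\<Sum>L\<in>S. b L * \<phi> (Y L))"
proof -
  have lin: "\<phi> (\<lambda>i. a * x i + c * y i) = a * \<phi> x + c * \<phi> y"
    if "x \<in> lincomb_span S Y" "y \<in> lincomb_span S Y" for a c x y
    using assms(2) that by (simp add: lin_functional_def)
  have "U \<subseteq> S \<Longrightarrow> \<phi> (\<lambda>i. \<Sum>N\<in>U. b N * Y N i) = (\<Sum>L\<in>U. b L * \<phi> (Y L))" for U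
  proof (induction U rule: infinite_finite_induct)
    case (infinite U)
    then show ?case using assms(1) by (meson rev_finite_subset)
  next
    case empty
    have "\<phi> (\<lambda>i. 0 * lincomb S (\<lambda>_. 0) Y i + 0 * lincomb S (\<lambda>_. 0) Y i) = 0"
      using lin[of "lincomb S (\<lambda>_. 0) Y" "lincomb S (\<lambda>_. 0) Y" 0 0] by simp
    then show ?case by (simp add: lincomb_def)
  next
    case (insert L U)
    have "(\<lambda>i. \<Sum>N\<in>U. b N * Y N i) = lincomb S (\<lambda>N. if N \<in> U then b N else 0) Y"
      using insert assms(1) by (simp add: lincomb_restrict)
    then have "(\<lambda>i. \<Sum>N\<in>U. b N * Y N i) \<in> lincomb_span S Y"
      by (simp only: lincomb_in_span)
    moreover have "Y L \<in> lincomb_span S Y"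
      using insert assms(1) by (simp add: generator_in_lincomb_span)
    ultimately have "\<phi> (\<lambda>i. b L * Y L i + 1 * (\<Sum>N\<in>U. b N * Y N i)) =
        b L * \<phi> (Y L) + 1 * \<phi> (\<lambda>i. \<Sum>N\<in>U. b N * Y N i)"
      by (intro lin)
    with insert show ?case by simp
  qed
  from this[of S] show ?thesis by (simp add: lincomb_def)
qed

lemma form_lincomb_generator:
  assumes fin: "finite S" "L \<in> S"
    and bil: "\<And>a b. F (lincomb S a Y) (lincomb S b Y) = (\<Sum>N\<in>S. \<Sum>L\<in>S. a N * b L * T N L)"
  shows "F (lincomb S a Y) (Y L) = (\<Sum>N\<in>S. a N * T N L)"
  using bil[of a "\<lambda>N. if N = L then 1 else 0"] assms by (simp add: lincomb_delta)

lemma coeff_eq_form_lincomb: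
  assumes fin: "finite S" "K \<in> S"
    and bil: "\<And>a b. F (lincomb S a Y) (lincomb S b Y) = (\<Sum>N\<in>S. \<Sum>L\<in>S. a N * b L * T N L)"
    and TW: "\<And>N L. N \<in> S \<Longrightarrow> L \<in> S \<Longrightarrow> (\<Sum>K\<in>S. T N K * W K L) = (if N = L then 1 else 0)"
  shows "c K = (\<Sum>L\<in>S. F (lincomb S c Y) (Y L) * W L K)"
proof -
  have "(\<Sum>L\<in>S. F (lincomb S c Y) (Y L) * W L K) = (\<Sum>N\<in>S. c N * (\<Sum>L\<in>S. T N L * W L K))"
    using form_lincomb_generator[OF fin(1) _ bil]
    by (simp add: sum_distrib_left sum_distrib_right mult_ac) (rule sum.swap)
  also have "\<dots> = c K" using fin by (simp add: TW)
  finally show ?thesis by simp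
qed

lemma perfect_pairing_left_lincomb_span:
  fixes Y :: "'m \<Rightarrow> 'x \<Rightarrow> 'r::comm_ring_1"
  assumes fin: "finite S"
    and bil: "\<And>a b. F (lincomb S a Y) (lincomb S b Y) = (\<Sum>N\<in>S. \<Sum>L\<in>S. a N * b L * T N L)"
    and TW: "\<And>N L. N \<in> S \<Longrightarrow> L \<in> S \<Longrightarrow> (\<Sum>K\<in>S. T N K * W K L) = (if N = L then 1 else 0)"
    and WT: "\<And>N L. N \<in> S \<Longrightarrow> L \<in> S \<Longrightarrow> (\<Sum>K\<in>S. W N K * T K L) = (if N = L then 1 else 0)"
    and lin: "lin_functional (lincomb_span S Y) \<phi>"
  shows "\<exists>!x. x \<in> lincomb_span S Y \<and> (\<forall>y\<in>lincomb_span S Y. F x y = \<phi> y)"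
proof -
  let ?G = "lincomb_span S Y"
  define a where "a N = (\<Sum>K\<in>S. \<phi> (Y K) * W K N)" for N
  have a: "(\<Sum>N\<in>S. a N * T N L) = \<phi> (Y L)" if "L \<in> S" for L
  proof -
    have "(\<Sum>N\<in>S. a N * T N L) = (\<Sum>K\<in>S. \<phi> (Y K) * (\<Sum>N\<in>S. W K N * T N L))"
      unfolding a_def by (simp add: sum_distrib_left sum_distrib_right mult_ac) (rule sum.swap)
    also have "\<dots> = \<phi> (Y L)" using that fin by (simp add: WT)
    finally show ?thesis .
  qed
  have "F (lincomb S a Y) y = \<phi> y" if "y \<in> ?G" for y
  proof -
    from that obtain b where y: "y = lincomb S b Y" by (auto simp: lincomb_span_def)
    have "F (lincomb S a Y) y = (\<Sum>L\<in>S. b L * (\<Sum>N\<in>S. a N * T N L))"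
      unfolding y bil by (simp add: sum_distrib_left mult_ac) (rule sum.swap)
    also have "\<dots> = \<phi> y"
      unfolding y lin_functional_lincomb[OF fin lin] by (simp add: a)
    finally show ?thesis .
  qed
  moreover have "x1 = x2"
    if x1: "x1 \<in> ?G" "\<forall>y\<in>?G. F x1 y = \<phi> y" and x2: "x2 \<in> ?G" "\<forall>y\<in>?G. F x2 y = \<phi> y" for x1 x2
  proof -
    obtain a1 a2 where x: "x1 = lincomb S a1 Y" "x2 = lincomb S a2 Y"
      using x1(1) x2(1) unfolding lincomb_span_def by blast
    have "a1 K = a2 K" if "K \<in> S" for K
      using coeff_eq_form_lincomb[OF fin that bil TW, of a1] coeff_eq_form_lincomb[OF fin that bil TW, of a2]
        x x1(2) x2(2)
      by (simp add: generator_in_lincomb_span fin)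
    then show ?thesis unfolding x by (rule lincomb_cong)
  qed
  ultimately show ?thesis by (meson lincomb_in_span)
qed

lemma perfect_pairing_lincomb_span:
  fixes Y :: "'m \<Rightarrow> 'x \<Rightarrow> 'r::comm_ring_1"
  assumes fin: "finite S"
    and bil: "\<And>a b. F (lincomb S a Y) (lincomb S b Y) = (\<Sum>N\<in>S. \<Sum>L\<in>S. a N * b L * T N L)"
    and TW: "\<And>N L. N \<in> S \<Longrightarrow> L \<in> S \<Longrightarrow> (\<Sum>K\<in>S. T N K * W K L) = (if N = L then 1 else 0)"
    and WT: "\<And>N L. N \<in> S \<Longrightarrow> L \<in> S \<Longrightarrow> (\<Sum>K\<in>S. W N K * T K L) = (if N = L then 1 else 0)"
  shows "perfect_pairing (lincomb_span S Y) (lincomb_span S Y) F"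
proof -
  have "F (lincomb S b Y) (lincomb S a Y) = (\<Sum>N\<in>S. \<Sum>L\<in>S. a N * b L * T L N)" for a b
    unfolding bil by (subst sum.swap) (simp add: mult_ac)
  moreover have "(\<Sum>K\<in>S. T K N * W L K) = (if N = L then 1 else 0)"
    "(\<Sum>K\<in>S. W K N * T L K) = (if N = L then 1 else 0)" if "N \<in> S" "L \<in> S" for N L
    using WT[OF that(2,1)] TW[OF that(2,1)] by (simp_all add: mult.commute eq_commute)
  ultimately have "\<exists>!y. y \<in> lincomb_span S Y \<and> (\<forall>x\<in>lincomb_span S Y. F x y = \<psi> x)"
    if "lin_functional (lincomb_span S Y) \<psi>" for \<psi>
    using perfect_pairing_left_lincomb_span[OF fin,
        where F = "\<lambda>y x. F x y" and T = "\<lambda>N L. T L N" and W = "\<lambda>N L. W L N"] that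
    by blast
  then show ?thesis
    unfolding perfect_pairing_def using perfect_pairing_left_lincomb_span[OF assms] by blast
qed

section \<open>Inverse Gram matrices\<close>

lemma lin_functional_eval: "lin_functional M (\<lambda>y. y a)"
  by (simp add: lin_functional_def)

lemma delta_in_fvec: "j \<in> B \<Longrightarrow> (\<lambda>i. if i = j then 1 else 0) \<in> fvec B"
  by (simp add: fvec_def)

lemma vform_delta_right:
  "finite Y \<Longrightarrow> j \<in> Y \<Longrightarrow> vform X Y g x (\<lambda>i. if i = j then 1 else 0) = (\<Sum>i\<in>X. x i * g i j)"
  by (simp add: vform_def)

lemma vform_delta_left:
  assumes "finite X" "j \<in> X"
  shows "vform X Y g (\<lambda>i. if i = j then 1 else 0) y = (\<Sum>k\<in>Y. g j k * y k)"
proof -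
  have "vform X Y g (\<lambda>i. if i = j then 1 else 0) y = (\<Sum>i\<in>X. if i = j then \<Sum>k\<in>Y. g i k * y k else 0)"
    unfolding vform_def by (intro sum.cong refl) (simp add: mult.commute)
  with assms show ?thesis by simp
qed

lemma right_inverse_on_unique:
  fixes g h P :: "'b \<Rightarrow> 'b \<Rightarrow> 'r::comm_ring_1"
  assumes "finite B" "right_inverse_on B P g" "right_inverse_on B g h" "a \<in> B" "j \<in> B"
  shows "P a j = h a j"
proof -
  have "P a j = (\<Sum>i\<in>B. P a i * (\<Sum>k\<in>B. g i k * h k j))"
    using assms by (simp add: right_inverse_on_def)
  also have "\<dots> = (\<Sum>k\<in>B. (\<Sum>i\<in>B. P a i * g i k) * h k j)"
    by (simp add: sum_distrib_left sum_distrib_right mult_ac) (rule sum.swap)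
  also have "\<dots> = h a j"
    using assms by (simp add: right_inverse_on_def)
  finally show ?thesis .
qed

lemma gram_inverse_exists:
  fixes g :: "'b \<Rightarrow> 'b \<Rightarrow> 'r::comm_ring_1"
  assumes fin: "finite B" and nondeg: "perfect_pairing (fvec B) (fvec B) (vform B B g)"
  obtains h where "right_inverse_on B g h" "right_inverse_on B h g"
proof -
  have "\<forall>a. \<exists>x. \<forall>y\<in>fvec B. vform B B g x y = y a"
    using nondeg[unfolded perfect_pairing_def, THEN conjunct1, rule_format, OF lin_functional_eval] by blast
  from choice[OF this] obtain P where P: "\<forall>a. \<forall>y\<in>fvec B. vform B B g (P a) y = y a"
    by blast
  have "\<forall>a. \<exists>y. \<forall>x\<in>fvec B. vform B B g x y = x a"
    using nondeg[unfolded perfect_pairing_def, THEN conjunct2, rule_format, OF lin_functional_eval] by blast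
  from choice[OF this] obtain Q where Q: "\<forall>a. \<forall>x\<in>fvec B. vform B B g x (Q a) = x a"
    by blast
  define h where "h c a = Q a c" for c a
  have gh: "right_inverse_on B g h"
    unfolding right_inverse_on_def h_def
  proof (intro ballI)
    fix b a assume "b \<in> B" "a \<in> B"
    then show "(\<Sum>c\<in>B. g b c * Q a c) = (if b = a then 1 else 0)"
      using Q[rule_format, OF delta_in_fvec, of b a] by (simp add: vform_delta_left fin eq_commute)
  qed
  have Pg: "right_inverse_on B P g"
    unfolding right_inverse_on_def
  proof (intro ballI)
    fix b a assume "b \<in> B" "a \<in> B"
    then show "(\<Sum>c\<in>B. P b c * g c a) = (if b = a then 1 else 0)"
      using P[rule_format, OF delta_in_fvec, of a b] by (simp add: vform_delta_right fin)
  qed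
  have "P b c = h b c" if "b \<in> B" "c \<in> B" for b c
    using right_inverse_on_unique[OF fin Pg gh that] .
  then have "right_inverse_on B h g"
    using Pg unfolding right_inverse_on_def by (metis (no_types, lifting) sum.cong)
  with gh show ?thesis by (rule that)
qed

text \<open>The parity-preserving part of \<open>h\<close> is already a right inverse of \<open>g\<close>, hence equals \<open>h\<close>.\<close>

lemma even_form_inverse:
  fixes g h :: "'b \<Rightarrow> 'b \<Rightarrow> 'r::comm_ring_1"
  assumes fin: "finite B" and "even_form B B1 g" "right_inverse_on B g h" "right_inverse_on B h g"
  shows "even_form B B1 h"
proof -
  define h' where "h' k c = (if (k \<in> B1) = (c \<in> B1) then h k c else 0)" for k c
  have "(\<Sum>k\<in>B. g i k * h' k a) = (\<Sum>k\<in>B. g i k * h k a)" if "i \<in> B" "a \<in> B" "(i \<in> B1) = (a \<in> B1)" for i a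
    using assms(2) that by (intro sum.cong refl) (auto simp: h'_def even_form_def)
  moreover have "(\<Sum>k\<in>B. g i k * h' k a) = 0" if "i \<in> B" "a \<in> B" "(i \<in> B1) \<noteq> (a \<in> B1)" for i a
    using assms(2) that by (intro sum.neutral) (auto simp: h'_def even_form_def)
  ultimately have "right_inverse_on B g h'"
    using assms(3) unfolding right_inverse_on_def by (metis (full_types))
  then have "h b c = h' b c" if "b \<in> B" "c \<in> B" for b c
    using right_inverse_on_unique[OF fin assms(4)] that by blast
  then show ?thesis unfolding even_form_def h'_def by (metis (full_types))
qed

context calibrated_basis
begin

text \<open>The coordinate functional of \<open>c \<in> B\<^sub>c\<close> is represented, via the pairing
  \<open>V\<^sub>a \<times> V\<^sub>c \<rightarrow> R\<close>, by some \<open>x \<in> V\<^sub>a\<close>, i.e.\ \<open>x g = e\<^sub>c\<close>; then row \<open>c\<close> of \<open>h\<close> is \<open>x g h = x\<close>,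
  which is supported in \<open>B\<^sub>a\<close>.\<close>

lemma inverse_isotropic:
  fixes g h :: "'b \<Rightarrow> 'b \<Rightarrow> 'r::comm_ring_1"
  assumes "even_form B B1 g" and iso: "\<forall>a\<in>Ba. \<forall>a'\<in>Ba. g a a' = 0"
    and perf: "perfect_pairing (fvec Ba) (fvec Bc) (vform Ba Bc g)"
    and gh: "right_inverse_on B g h"
    and c: "c \<in> Bc" and c': "c' \<in> Bc"
  shows "h c c' = 0"
proof -
  obtain x where x: "\<forall>y\<in>fvec Bc. vform Ba Bc g x y = y c"
    using perf[unfolded perfect_pairing_def, THEN conjunct1, rule_format, OF lin_functional_eval] by blast
  have x_dual: "(\<Sum>a\<in>Ba. x a * g a z) = (if z = c then 1 else 0)" if z: "z \<in> B" for z
  proof -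
    consider "z \<in> Bc" | "z \<in> Ba" | "z \<in> B1" using z B_eq by auto
    then show ?thesis
    proof cases
      case 1
      then show ?thesis
        using x[rule_format, OF delta_in_fvec[OF 1]] finite_Bc by (simp add: vform_delta_right eq_commute)
    next
      case 2
      then show ?thesis using iso c disjoint by auto
    next
      case 3
      moreover have "g a z = 0" if "a \<in> Ba" for a
        using assms(1) that 3 B_eq disjoint unfolding even_form_def by blast
      ultimately show ?thesis using c disjoint by auto
    qed
  qed
  have "h c c' = (\<Sum>z\<in>B. (if z = c then 1 else 0) * h z c')"
    using c B_eq finite_B by simp
  also have "\<dots> = (\<Sum>z\<in>B. (\<Sum>a\<in>Ba. x a * g a z) * h z c')"
    by (intro sum.cong refl) (simp add: x_dual)
  also have "\<dots> = (\<Sum>a\<in>Ba. x a * (\<Sum>z\<in>B. g a z * h z c'))"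
    by (simp add: sum_distrib_left sum_distrib_right mult_ac) (rule sum.swap)
  also have "\<dots> = 0"
    using gh c' B_eq disjoint finite_Ba by (auto simp: right_inverse_on_def intro!: sum.neutral)
  finally show ?thesis .
qed

end

section \<open>The module \<open>\<tilde>\<Gamma>\<^sup>d V\<close> and the form \<open>(-,-)\<^sub>\<sim>\<close>\<close>

lemma lincomb_span_image_units:
  fixes u :: "'s \<Rightarrow> 'r::comm_ring_1"
  assumes fin: "finite S" and unit: "\<And>s. s \<in> S \<Longrightarrow> u s * u s = 1"
  shows "lincomb_span S (\<lambda>s x. u s * Y (\<pi> s) x) = lincomb_span (\<pi> ` S) Y"
proof -
  have group: "lincomb S c (\<lambda>s x. u s * Y (\<pi> s) x) =
      lincomb (\<pi> ` S) (\<lambda>N. \<Sum>s\<in>{s \<in> S. \<pi> s = N}. c s * u s) Y" for c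
  proof
    fix x
    have "(\<Sum>s\<in>S. c s * (u s * Y (\<pi> s) x)) = (\<Sum>N\<in>\<pi> ` S. \<Sum>s\<in>{s \<in> S. \<pi> s = N}. c s * (u s * Y (\<pi> s) x))"
      using fin by (intro sum.group[symmetric]) auto
    also have "\<dots> = (\<Sum>N\<in>\<pi> ` S. (\<Sum>s\<in>{s \<in> S. \<pi> s = N}. c s * u s) * Y N x)"
      by (simp add: sum_distrib_right mult.assoc)
    finally show "lincomb S c (\<lambda>s x. u s * Y (\<pi> s) x) x =
        lincomb (\<pi> ` S) (\<lambda>N. \<Sum>s\<in>{s \<in> S. \<pi> s = N}. c s * u s) Y x"
      by (simp add: lincomb_def)
  qed
  have "lincomb (\<pi> ` S) a Y \<in> lincomb_span S (\<lambda>s x. u s * Y (\<pi> s) x)" for a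
  proof -
    define r where "r N = (SOME s. s \<in> S \<and> \<pi> s = N)" for N
    have r: "r N \<in> S" "\<pi> (r N) = N" if "N \<in> \<pi> ` S" for N
      using that someI_ex[of "\<lambda>s. s \<in> S \<and> \<pi> s = N"] by (auto simp: r_def)
    define c where "c s = (if s = r (\<pi> s) then a (\<pi> s) * u s else 0)" for s
    have "(\<Sum>s\<in>{s \<in> S. \<pi> s = N}. c s * u s) = a N" if "N \<in> \<pi> ` S" for N
    proof -
      have "(\<Sum>s\<in>{s \<in> S. \<pi> s = N}. c s * u s) = (\<Sum>s\<in>{s \<in> S. \<pi> s = N}. if s = r N then a N else 0)"
        using unit by (intro sum.cong refl) (auto simp: c_def mult.assoc)
      also have "\<dots> = a N" using r[OF that] fin by simp
      finally show ?thesis .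
    qed
    then have "lincomb (\<pi> ` S) a Y = lincomb S c (\<lambda>s x. u s * Y (\<pi> s) x)"
      unfolding group by (intro lincomb_cong) simp
    then show ?thesis by simp
  qed
  then show ?thesis
    unfolding group lincomb_span_def by auto
qed

lemma yvec_eq_odd_sign_y_mset: "yvec B1 Bc bs = (\<lambda>cs. odd_sign B1 bs * y_mset B1 Bc (mset bs) cs)"
  by (auto simp: fun_eq_iff yvec_def xvec_def y_mset_def x_mset_def odd_sign_def fact_c_def mult_fact_def
      count_mset power_add)

lemma tGamma_eq_lincomb_span:
  assumes "finite B"
  shows "tGamma B B1 Bc d = lincomb_span (Seq_msets B B1 d) (y_mset B1 Bc)"
proof -
  have "tGamma B B1 Bc d = lincomb_span (Seqs B B1 d) (yvec B1 Bc)"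
    by (auto simp: tGamma_def lincomb_span_def lincomb_def)
  also have "\<dots> = lincomb_span (Seqs B B1 d) (\<lambda>bs cs. odd_sign B1 bs * y_mset B1 Bc (mset bs) cs)"
    by (simp add: yvec_eq_odd_sign_y_mset[abs_def])
  also have "\<dots> = lincomb_span (Seq_msets B B1 d) (y_mset B1 Bc)"
    unfolding Seq_msets_def using assms by (intro lincomb_span_image_units) (simp_all add: Seqs_def)
  finally show ?thesis .
qed

lemma tform_lincomb_left:
  "tform B B1 f d (lincomb S a v) w = (\<Sum>N\<in>S. a N * tform B B1 f d (v N) w)"
  unfolding tform_def lincomb_def
  by (simp add: sum_distrib_left sum_distrib_right mult_ac sum.swap[of _ S])

lemma tform_lincomb_right:
  "tform B B1 f d z (lincomb S b w) = (\<Sum>L\<in>S. b L * tform B B1 f d z (w L))"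
  unfolding tform_def lincomb_def
  by (simp add: sum_distrib_left sum_distrib_right mult_ac sum.swap[of _ S])

lemma tform_lincomb:
  "tform B B1 f d (lincomb S a v) (lincomb S' b w) =
    (\<Sum>N\<in>S. \<Sum>L\<in>S'. a N * b L * tform B B1 f d (v N) (w L))"
  by (simp add: tform_lincomb_left tform_lincomb_right sum_distrib_left mult_ac) (rule sum.swap)

lemma tform_tilde_eqI:
  fixes f :: "'b \<Rightarrow> 'b \<Rightarrow> 'r::{idom, ring_char_0}"
  shows "tform B B1 f d z w = of_nat (fact d) * r \<Longrightarrow> tform_tilde B B1 f d z w = r"
  unfolding tform_tilde_def by (rule the_equality) auto

lemma tform_eq_fact_mult_tform_tilde:
  fixes f :: "'b \<Rightarrow> 'b \<Rightarrow> 'r::{idom, ring_char_0}"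
  assumes "of_nat (fact d) dvd tform B B1 f d z w"
  shows "tform B B1 f d z w = of_nat (fact d) * tform_tilde B B1 f d z w"
  using assms tform_tilde_eqI by (metis dvdE)

lemma tpar_eq_if_same_parity:
  assumes "length cs = length bs" "same_parity B1 bs cs"
  shows "tpar B1 cs = tpar B1 bs"
proof -
  have "{i. i < length cs \<and> cs ! i \<in> B1} = {i. i < length bs \<and> bs ! i \<in> B1}"
    using assms by (auto simp: same_parity_def)
  then show ?thesis by (simp add: tpar_def length_filter_conv_card)
qed

lemma tform_homog_orthogonal:
  fixes f :: "'b \<Rightarrow> 'b \<Rightarrow> 'r::comm_ring_1"
  assumes "even_form B B1 f" "homog B1 p z" "homog B1 q w" "p \<noteq> q"
  shows "tform B B1 f d z w = 0"
  unfolding tform_def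
proof (intro sum.neutral ballI)
  fix bs cs assume bs: "bs \<in> tuples B d" and cs: "cs \<in> tuples B d"
  show "z bs * w cs * (-1) ^ tsign B1 bs cs * (\<Prod>k<d. f (bs ! k) (cs ! k)) = 0"
  proof (cases "z bs = 0 \<or> w cs = 0")
    case False
    then have "tpar B1 bs = p" "tpar B1 cs = q" using assms(2,3) by (auto simp: homog_def)
    then have "\<not> same_parity B1 bs cs"
      using assms(4) tpar_eq_if_same_parity[of cs bs B1] bs cs by (auto simp: tuples_def)
    then show ?thesis using prod_eq_0_if_not_same_parity[OF assms(1) bs cs] by simp
  qed auto
qed

lemma prod_minus_one_power_if:
  fixes d :: nat
  shows "(\<Prod>k<d. (-1::'r::comm_ring_1) ^ (if P k then 1 else 0)) = (-1) ^ card {k. k < d \<and> P k}"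
proof -
  have "(\<Sum>k<d. if P k then 1 else 0) = (\<Sum>k\<in>{k \<in> {..<d}. P k}. 1::nat)"
    by (rule sum.inter_filter[symmetric]) simp
  also have "\<dots> = card {k. k < d \<and> P k}"
    by simp
  finally have "(\<Sum>k<d. if P k then 1 else 0) = card {k. k < d \<and> P k}" .
  then show ?thesis by (simp flip: power_sum)
qed

lemma tkernel_supersym:
  fixes g :: "'b \<Rightarrow> 'b \<Rightarrow> 'r::comm_ring_1"
  assumes evg: "even_form B B1 g"
    and sup: "\<forall>b\<in>B. \<forall>c\<in>B. g b c = \<epsilon> * (-1) ^ (if b \<in> B1 \<and> c \<in> B1 then 1 else 0) * g c b"
    and bs: "bs \<in> tuples B d" "tpar B1 bs = p" and cs: "cs \<in> tuples B d" "tpar B1 cs = q"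
  shows "tkernel B1 g d bs cs = \<epsilon> ^ d * (-1) ^ (p * q) * tkernel B1 g d cs bs"
proof (cases "same_parity B1 bs cs")
  case False
  moreover have "length bs = d" "length cs = d" using bs cs by (auto simp: tuples_def)
  ultimately have "\<not> same_parity B1 cs bs" by (auto simp: same_parity_def)
  with False show ?thesis
    using prod_eq_0_if_not_same_parity[OF evg bs(1) cs(1)] prod_eq_0_if_not_same_parity[OF evg cs(1) bs(1)]
    by (simp add: tkernel_def)
next
  case True
  have len: "length bs = d" "length cs = d" using bs cs by (auto simp: tuples_def)
  let ?m = "card {k. k < d \<and> bs ! k \<in> B1}"
  have "(\<Prod>k<d. g (bs ! k) (cs ! k)) = (\<Prod>k<d. \<epsilon> * (-1) ^ (if bs ! k \<in> B1 then 1 else 0) * g (cs ! k) (bs ! k))"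
  proof (intro prod.cong refl)
    fix k assume "k \<in> {..<d}"
    then have "bs ! k \<in> B" "cs ! k \<in> B" "(bs ! k \<in> B1) = (cs ! k \<in> B1)"
      using bs cs True len by (auto simp: tuples_def same_parity_def)
    then show "g (bs ! k) (cs ! k) = \<epsilon> * (-1) ^ (if bs ! k \<in> B1 then 1 else 0) * g (cs ! k) (bs ! k)"
      using sup[rule_format, of "bs ! k" "cs ! k"] by simp
  qed
  also have "\<dots> = \<epsilon> ^ d * (-1) ^ ?m * (\<Prod>k<d. g (cs ! k) (bs ! k))"
    by (simp add: prod.distrib prod_minus_one_power_if)
  also have "(-1) ^ ?m = ((-1) ^ (p * q) :: 'r)"
  proof -
    have "p = ?m mod 2" "q = p"
      using bs(2) cs(2) tpar_eq_if_same_parity[OF _ True] len by (simp_all add: tpar_def length_filter_conv_card)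
    then show ?thesis by (auto simp: minus_one_power_iff)
  qed
  finally show ?thesis
    using tkernel_even_form[OF evg bs(1) cs(1)] tkernel_even_form[OF evg cs(1) bs(1)]
      tsign_self_same_parity[OF _ True] len by (simp add: mult_ac)
qed

lemma tform_supersym:
  fixes g :: "'b \<Rightarrow> 'b \<Rightarrow> 'r::comm_ring_1"
  assumes evg: "even_form B B1 g"
    and sup: "\<forall>b\<in>B. \<forall>c\<in>B. g b c = \<epsilon> * (-1) ^ (if b \<in> B1 \<and> c \<in> B1 then 1 else 0) * g c b"
    and z: "homog B1 p z" and w: "homog B1 q w"
  shows "tform B B1 g d z w = \<epsilon> ^ d * (-1) ^ (p * q) * tform B B1 g d w z"
proof -
  have "z bs * w cs * tkernel B1 g d bs cs = \<epsilon> ^ d * (-1) ^ (p * q) * (w cs * z bs * tkernel B1 g d cs bs)"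
    if "bs \<in> tuples B d" "cs \<in> tuples B d" for bs cs
    using z w tkernel_supersym[OF evg sup that(1) _ that(2)]
    by (cases "z bs = 0 \<or> w cs = 0") (auto simp: homog_def mult_ac)
  then have "tform B B1 g d z w =
      (\<Sum>bs\<in>tuples B d. \<Sum>cs\<in>tuples B d. \<epsilon> ^ d * (-1) ^ (p * q) * (w cs * z bs * tkernel B1 g d cs bs))"
    unfolding tform_def tkernel_def by (simp add: mult.assoc)
  also have "\<dots> = \<epsilon> ^ d * (-1) ^ (p * q) * tform B B1 g d w z"
    unfolding tform_def tkernel_def by (subst sum.swap) (simp add: sum_distrib_left mult_ac)
  finally show ?thesis .
qed

context calibrated_basis
begin

lemma dvd_tform_tGamma:
  fixes f :: "'b \<Rightarrow> 'b \<Rightarrow> 'r::comm_ring_1"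
  assumes "even_form B B1 f" "\<forall>a\<in>Ba. \<forall>a'\<in>Ba. f a a' = 0"
    and "z \<in> tGamma B B1 Bc d" "w \<in> tGamma B B1 Bc d"
  shows "of_nat (fact d) dvd tform B B1 f d z w"
  using assms(3,4) dvd_tform_y_mset[OF assms(1,2)]
  by (auto simp: tGamma_eq_lincomb_span[OF finite_B] lincomb_span_def tform_lincomb
      intro!: dvd_sum dvd_mult)

lemma perfect_pairing_tGamma:
  fixes f h :: "'b \<Rightarrow> 'b \<Rightarrow> 'r::{idom, ring_char_0}"
  assumes evf: "even_form B B1 f" and iso_f: "\<forall>a\<in>Ba. \<forall>a'\<in>Ba. f a a' = 0"
    and evh: "even_form B B1 h" and iso_h: "\<forall>c\<in>Bc. \<forall>c'\<in>Bc. h c c' = 0"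
    and fh: "right_inverse_on B f h" and hf: "right_inverse_on B h f"
  shows "perfect_pairing (tGamma B B1 Bc d) (tGamma B B1 Bc d) (tform_tilde B B1 f d)"
proof -
  interpret dual: calibrated_basis B Bc Ba B1 by (rule swap_roles)
  let ?S = "Seq_msets B B1 d"
  define T where "T N L = tform_tilde B B1 f d (y_mset B1 Bc N) (y_mset B1 Bc L)" for N L
  define W where "W N L = tform_tilde B B1 h d (y_mset B1 Ba N) (y_mset B1 Ba L)" for N L
  have T: "tform B B1 f d (y_mset B1 Bc N) (y_mset B1 Bc L) = of_nat (fact d) * T N L"
    if "N \<in> ?S" "L \<in> ?S" for N L
    unfolding T_def by (rule tform_eq_fact_mult_tform_tilde[OF dvd_tform_y_mset[OF evf iso_f that]])
  have W: "tform B B1 h d (y_mset B1 Ba N) (y_mset B1 Ba L) = of_nat (fact d) * W N L"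
    if "N \<in> ?S" "L \<in> ?S" for N L
    unfolding W_def by (rule tform_eq_fact_mult_tform_tilde[OF dual.dvd_tform_y_mset[OF evh iso_h that]])
  have "tform B B1 f d (lincomb ?S a (y_mset B1 Bc)) (lincomb ?S b (y_mset B1 Bc)) =
      of_nat (fact d) * (\<Sum>N\<in>?S. \<Sum>L\<in>?S. a N * b L * T N L)" for a b
    by (simp add: tform_lincomb T sum_distrib_left mult_ac)
  then have bil: "tform_tilde B B1 f d (lincomb ?S a (y_mset B1 Bc)) (lincomb ?S b (y_mset B1 Bc)) =
      (\<Sum>N\<in>?S. \<Sum>L\<in>?S. a N * b L * T N L)" for a b
    by (rule tform_tilde_eqI)
  have cancel: "X = (if N = L then 1 else 0)"
    if "of_nat (fact d) ^ 2 * X = (if N = L then of_nat (fact d) ^ 2 else (0::'r))" for X and N L :: "'b multiset"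
    using that by (cases "N = L") auto
  have TW: "(\<Sum>K\<in>?S. T N K * W K L) = (if N = L then 1 else 0)" if "N \<in> ?S" "L \<in> ?S" for N L
    using y_mset_gram_inverse[OF evf evh fh that] that
    by (intro cancel) (simp add: T W power2_eq_square sum_distrib_left mult_ac)
  have WT: "(\<Sum>K\<in>?S. W N K * T K L) = (if N = L then 1 else 0)" if "N \<in> ?S" "L \<in> ?S" for N L
    using dual.y_mset_gram_inverse[OF evh evf hf that] that
    by (intro cancel) (simp add: T W power2_eq_square sum_distrib_left mult_ac)
  show ?thesis
    unfolding tGamma_eq_lincomb_span[OF finite_B]
    by (rule perfect_pairing_lincomb_span[OF finite_Seq_msets[OF finite_B] bil TW WT])
qed

end

theorem proposition3p11:
  fixes Ba Bc B1 B :: "'b::linorder set"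
    and g :: "'b \<Rightarrow> 'b \<Rightarrow> 'r::{idom, ring_char_0}"
    and \<epsilon> :: 'r
    and d :: nat
  assumes pid: "pid_ring TYPE('r)"
    and finB: "finite B"
    and B_def: "B = Ba \<union> Bc \<union> B1"
    and disj: "Ba \<inter> Bc = {}" "Ba \<inter> B1 = {}" "Bc \<inter> B1 = {}"
    and even: "\<forall>b\<in>B. \<forall>c\<in>B. (b \<in> B1) \<noteq> (c \<in> B1) \<longrightarrow> g b c = 0"
    and eps: "\<epsilon> = 1 \<or> \<epsilon> = -1"
    and supersym: "\<forall>b\<in>B. \<forall>c\<in>B. g b c = \<epsilon> * (-1) ^ (if b \<in> B1 \<and> c \<in> B1 then 1 else 0) * g c b"
    and nondeg: "perfect_pairing (fvec B) (fvec B) (vform B B g)"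
    and iso: "\<forall>a\<in>Ba. \<forall>a'\<in>Ba. g a a' = 0"
    and perf: "perfect_pairing (fvec Ba) (fvec Bc) (vform Ba Bc g)"
  shows "(\<forall>z\<in>tGamma B B1 Bc d. \<forall>w\<in>tGamma B B1 Bc d. of_nat (fact d) dvd tform B B1 g d z w)
     \<and> (\<forall>z\<in>tGamma B B1 Bc d. \<forall>w\<in>tGamma B B1 Bc d. \<forall>p q. homog B1 p z \<and> homog B1 q w \<and> p \<noteq> q
           \<longrightarrow> tform_tilde B B1 g d z w = 0)
     \<and> perfect_pairing (tGamma B B1 Bc d) (tGamma B B1 Bc d) (tform_tilde B B1 g d)
     \<and> (\<forall>z\<in>tGamma B B1 Bc d. \<forall>w\<in>tGamma B B1 Bc d. \<forall>p q. homog B1 p z \<and> homog B1 q w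
           \<longrightarrow> tform_tilde B B1 g d z w = \<epsilon> ^ d * (-1) ^ (p * q) * tform_tilde B B1 g d w z)"
proof -
  interpret calibrated_basis B Ba Bc B1
    using finB B_def disj by unfold_locales
  have evg: "even_form B B1 g" using even by (simp add: even_form_def)
  obtain h where gh: "right_inverse_on B g h" and hg: "right_inverse_on B h g"
    using gram_inverse_exists[OF finB nondeg] by blast
  have evh: "even_form B B1 h" by (rule even_form_inverse[OF finB evg gh hg])
  have iso_h: "\<forall>c\<in>Bc. \<forall>c'\<in>Bc. h c c' = 0" using inverse_isotropic[OF evg iso perf gh] by blast
  have dvd: "of_nat (fact d) dvd tform B B1 g d z w" if "z \<in> tGamma B B1 Bc d" "w \<in> tGamma B B1 Bc d" for z w
    by (rule dvd_tform_tGamma[OF evg iso that])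
  have "tform_tilde B B1 g d z w = 0" if "homog B1 p z" "homog B1 q w" "p \<noteq> q" for z w p q
    using tform_homog_orthogonal[OF evg that] by (intro tform_tilde_eqI) simp
  moreover have "tform_tilde B B1 g d z w = \<epsilon> ^ d * (-1) ^ (p * q) * tform_tilde B B1 g d w z"
    if "z \<in> tGamma B B1 Bc d" "w \<in> tGamma B B1 Bc d" "homog B1 p z" "homog B1 q w" for z w p q
    using tform_supersym[OF evg supersym that(3,4)] tform_eq_fact_mult_tform_tilde[OF dvd[OF that(2,1)]]
    by (intro tform_tilde_eqI) (simp add: mult_ac)
  ultimately show ?thesis
    using dvd perfect_pairing_tGamma[OF evg iso evh iso_h gh hg] by blast
qed

end
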